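(* Assume $m=n-1$ in the setting below, and write coordinates as $x=q^1$, $y^a=q^{1+a}$ ($a=1,\dots,n-1$), $\mathbf y=(y^1,\dots,y^{n-1})$, with $\varphi(U)=(-r,r)\times B$ for an open box $B\ni\mathbf 0$. Let $\hat P^k:=\hat{\mathbb P}^{k1}$ and $$G:=\frac{\partial\mathbb H_{11}}{\partial x}\hat P^1+\frac{\partial\mathbb H_{11}}{\partial y^a}\hat P^{1+a}+\frac{\partial(\hat P^i\hat P^j)}{\partial x}\mathbb H_{1i}\mathbb H_{1j}.$$ Then: (i) a quadratic form $\mathfrak K$ on $\hat W$, with $K:=\mathbb K_{11}$ (so $\mathfrak K(a\sigma_1)=\tfrac12Ka^2$), solves the kinetic equation $\{\mathfrak K\circ\hat{\mathfrak p},\mathfrak H\}(\sigma)=0$ for all $\sigma\in\hat W$ on $U$ if and only if $$K(x,\mathbf y)=\xi(\mathbf y)\exp\Big(-\int_0^xG(t,\mathbf y)\,\mathrm dt\Big)$$ for some smooth positive function $\xi$ on $B$; (ii) for any such $K$, with $u:=\big(\frac{\partial h}{\partial x}\hat P^1+\frac{\partial h}{\partial y^a}\hat P^{1+a}\big)K$, the function $$\hat h(x,\mathbf y)=\int_0^xu(t,\mathbf y)\,\mathrm dt+\frac{\varpi}{2}\sum_{a=1}^{n-1}(y^a)^2$$ solves the potential equation $\big(\mathrm d\hat h\circ\mathbb F\mathfrak H-\mathrm dh\circ\mathbb F(\mathfrak K\circ\hat{\mathfrak p})\big)(\sigma)=0$ for all $\sigma\in\hat W$ on $U$, for every constant $\varpi$;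 (iii) if $q_0$ is a critical point of $h$ with $\varphi(q_0)=\mathbf 0$, this $\hat h$ has $\mathbf 0$ as a critical point with positive-definite Hessian whenever $\frac{\partial u}{\partial x}(\mathbf 0)>0$ and $\varpi>\frac{\sum_{a=1}^{n-1}(\partial u/\partial y^a(\mathbf 0))^2}{\partial u/\partial x(\mathbf 0)}$; and if $\frac{\partial u}{\partial x}(\mathbf 0)\le 0$, no solution of the potential equation has a positive-definite Hessian at $\mathbf 0$.
   Context: Setting: $\mathfrak H$ is a quadratic form on $T^*Q$ ($Q$ a smooth $n$-manifold), i.e. $\mathfrak H(\alpha)=\tfrac12\langle\alpha,\rho^\sharp(\alpha)\rangle$ for a smooth positive-definite fibered inner product $\rho$ on $TQ$; $\mathbb F\mathfrak H=\rho^\sharp:T^*Q\to TQ$ is its fiber derivative ($\langle\beta,\mathbb Ff(\alpha)\rangle=\frac{d}{dt}f(\alpha+t\beta)|_{t=0}$). $h:Q\to\mathbb R$ is smooth, $W\subseteq T^*Q$ is a subbundle of rank $m$. $(U,\varphi=(q^1,\dots,q^n))$ is a chart such that $\hat W:=(\mathbb F\mathfrak H)^{-1}(\mathrm{span}\{\partial/\partial q^1,\dots,\partial/\partial q^{n-m}\})$ is a complement of $W$ on $U$ ($T^*Q=\hat W\oplus W$), with $\hat{\mathfrak p}$ the projection onto $\hat W$ along $W$. A quadratic form on $\hat W$ is $\mathfrak K(\alpha)=\tfrac12\langle\alpha,\kappa^\sharp(\alpha)\rangle$ for a positive-definite fibered inner product $\kappa$ on $\hat W^*$. $\{\cdot,\cdot\}$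 is the canonical Poisson bracket on $T^*Q$. For smooth $g$ on $Q$ and fiber-preserving $F:T^*Q\to TQ$, $\mathrm dg\circ F$ is $\alpha\mapsto\langle\mathrm dg(\pi(\alpha)),F(\alpha)\rangle$. Indices $i,j,k\in\{1,\dots,n\}$, Greek indices in $\{1,\dots,n-m\}$, summation over repeated indices. $\mathbb H_{ij}:=\langle(\mathbb F\mathfrak H)^{-1}(\partial/\partial q^i),\partial/\partial q^j\rangle$; $\sigma_\mu:=\mathbb H_{\mu k}\mathrm dq^k$ is a basis of $\hat W$; $\hat{\mathbb P}^{k\mu}$ is defined by $\hat{\mathfrak p}(\mathrm dq^k)=\hat{\mathbb P}^{k\mu}\sigma_\mu$; $\mathbb K_{\mu\nu}$ is defined by $\mathfrak K(a^\mu\sigma_\mu)=\tfrac12\mathbb K_{\mu\nu}a^\mu a^\nu$. Functions are identified with their local representatives on $\varphi(U)$. *)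

theory Defs
  imports "HOL-Analysis.Analysis"
begin

text \<open>Everything is expressed in the chart: points of phi(U) and covectors are
 vectors in real^'n (coordinates q^k, resp. components alpha_k = alpha(d/dq^k)).
 The distinguished index o plays the role of the coordinate x = q^1; the other
 indices are the coordinates y^a.\<close>

definition partial :: "(real^'n \<Rightarrow> real) \<Rightarrow> 'n \<Rightarrow> real^'n \<Rightarrow> real" where
  "partial f i q = deriv (\<lambda>t. f (q + t *\<^sub>R axis i 1)) 0"

fun pd :: "(real^'n \<Rightarrow> real) \<Rightarrow> 'n list \<Rightarrow> real^'n \<Rightarrow> real" where
  "pd f [] = f"
| "pd f (i # is) = partial (pd f is) i"

definition smooth_on :: "(real^'n) set \<Rightarrow> (real^'n \<Rightarrow> real) \<Rightarrow> bool" where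
  "smooth_on S f \<longleftrightarrow> (\<forall>is. continuous_on S (pd f is) \<and>
      (\<forall>i. \<forall>q\<in>S. (\<lambda>t. pd f is (q + t *\<^sub>R axis i 1)) field_differentiable (at 0)))"

text \<open>g q is the matrix of rho at q, g q $ i $ j = rho(d/dq^i, d/dq^j).
 rho-sharp (= FH, the fiber derivative of the Hamiltonian) is the inverse matrix.\<close>
definition FH :: "(real^'n \<Rightarrow> real^'n^'n) \<Rightarrow> real^'n \<Rightarrow> real^'n \<Rightarrow> real^'n" where
  "FH g q \<alpha> = matrix_inv (g q) *v \<alpha>"

definition hamil :: "(real^'n \<Rightarrow> real^'n^'n) \<Rightarrow> real^'n \<Rightarrow> real^'n \<Rightarrow> real" where
  "hamil g q \<alpha> = (1/2) * (\<alpha> \<bullet> FH g q \<alpha>)"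

text \<open>(FH)^(-1) = rho-flat is given by the matrix g q.  Hc = blackboard H_ij.\<close>
definition Hc :: "(real^'n \<Rightarrow> real^'n^'n) \<Rightarrow> real^'n \<Rightarrow> 'n \<Rightarrow> 'n \<Rightarrow> real" where
  "Hc g q i j = (g q *v axis i 1) $ j"

text \<open>What = (FH)^(-1)(span{d/dx}), and its basis sigma_1.\<close>
definition What :: "(real^'n \<Rightarrow> real^'n^'n) \<Rightarrow> 'n \<Rightarrow> real^'n \<Rightarrow> (real^'n) set" where
  "What g ix q = (\<lambda>v. g q *v v) ` span {axis ix 1}"

definition sigma1 :: "(real^'n \<Rightarrow> real^'n^'n) \<Rightarrow> 'n \<Rightarrow> real^'n \<Rightarrow> real^'n" where
  "sigma1 g ix q = (\<chi> k. Hc g q ix k)"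

definition phat :: "(real^'n \<Rightarrow> real^'n^'n) \<Rightarrow> 'n \<Rightarrow> (real^'n \<Rightarrow> (real^'n) set)
     \<Rightarrow> real^'n \<Rightarrow> real^'n \<Rightarrow> real^'n" where
  "phat g ix W q \<alpha> = (THE \<beta>. \<beta> \<in> What g ix q \<and> \<alpha> - \<beta> \<in> W q)"

definition Phat :: "(real^'n \<Rightarrow> real^'n^'n) \<Rightarrow> 'n \<Rightarrow> (real^'n \<Rightarrow> (real^'n) set)
     \<Rightarrow> 'n \<Rightarrow> real^'n \<Rightarrow> real" where
  "Phat g ix W k q = (THE c. phat g ix W q (axis k 1) = c *\<^sub>R sigma1 g ix q)"

definition Kform :: "(real^'n \<Rightarrow> real^'n^'n) \<Rightarrow> 'n \<Rightarrow> (real^'n \<Rightarrow> real)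
     \<Rightarrow> real^'n \<Rightarrow> real^'n \<Rightarrow> real" where
  "Kform g ix K q \<beta> = (1/2) * K q * (THE a. \<beta> = a *\<^sub>R sigma1 g ix q)^2"

definition KP :: "(real^'n \<Rightarrow> real^'n^'n) \<Rightarrow> 'n \<Rightarrow> (real^'n \<Rightarrow> (real^'n) set)
     \<Rightarrow> (real^'n \<Rightarrow> real) \<Rightarrow> real^'n \<Rightarrow> real^'n \<Rightarrow> real" where
  "KP g ix W K q \<alpha> = Kform g ix K q (phat g ix W q \<alpha>)"

text \<open>Canonical Poisson bracket of functions F q p on T*phi(U) = phi(U) x R^n.\<close>
definition poisson :: "(real^'n \<Rightarrow> real^'n \<Rightarrow> real) \<Rightarrow> (real^'n \<Rightarrow> real^'n \<Rightarrow> real)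
     \<Rightarrow> real^'n \<Rightarrow> real^'n \<Rightarrow> real" where
  "poisson F G q p = (\<Sum>i\<in>UNIV. partial (\<lambda>q'. F q' p) i q * partial (G q) i p
                                - partial (F q) i p * partial (\<lambda>q'. G q' p) i q)"

definition fib_deriv :: "(real^'n \<Rightarrow> real^'n \<Rightarrow> real) \<Rightarrow> real^'n \<Rightarrow> real^'n \<Rightarrow> real^'n" where
  "fib_deriv F q \<alpha> = (\<chi> i. partial (F q) i \<alpha>)"

text \<open>dg o F : alpha |-> <dg(pi alpha), F(alpha)>.\<close>
definition dcomp :: "(real^'n \<Rightarrow> real) \<Rightarrow> (real^'n \<Rightarrow> real^'n \<Rightarrow> real^'n)
     \<Rightarrow> real^'n \<Rightarrow> real^'n \<Rightarrow> real" where
  "dcomp f F q \<alpha> = (\<Sum>i\<in>UNIV. partial f i q * (F q \<alpha> $ i))"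

definition upd :: "'n \<Rightarrow> real^'n \<Rightarrow> real \<Rightarrow> real^'n" where
  "upd ix q t = (\<chi> k. if k = ix then t else q $ k)"

definition oint :: "real \<Rightarrow> real \<Rightarrow> (real \<Rightarrow> real) \<Rightarrow> real" where
  "oint a b f = (if a \<le> b then integral {a..b} f else - integral {b..a} f)"

definition Gfun :: "(real^'n \<Rightarrow> real^'n^'n) \<Rightarrow> 'n \<Rightarrow> (real^'n \<Rightarrow> (real^'n) set)
     \<Rightarrow> real^'n \<Rightarrow> real" where
  "Gfun g ix W q =
     partial (\<lambda>q'. Hc g q' ix ix) ix q * Phat g ix W ix q
   + (\<Sum>a\<in>UNIV - {ix}. partial (\<lambda>q'. Hc g q' ix ix) a q * Phat g ix W a q)
   + (\<Sum>i\<in>UNIV. \<Sum>j\<in>UNIV. partial (\<lambda>q'. Phat g ix W i q' * Phat g ix W j q') ix q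
                              * Hc g q ix i * Hc g q ix j)"

definition ufun :: "(real^'n \<Rightarrow> real^'n^'n) \<Rightarrow> 'n \<Rightarrow> (real^'n \<Rightarrow> (real^'n) set)
     \<Rightarrow> (real^'n \<Rightarrow> real) \<Rightarrow> (real^'n \<Rightarrow> real) \<Rightarrow> real^'n \<Rightarrow> real" where
  "ufun g ix W h K q =
     (partial h ix q * Phat g ix W ix q
      + (\<Sum>a\<in>UNIV - {ix}. partial h a q * Phat g ix W a q)) * K q"

definition hhat :: "(real^'n \<Rightarrow> real^'n^'n) \<Rightarrow> 'n \<Rightarrow> (real^'n \<Rightarrow> (real^'n) set)
     \<Rightarrow> (real^'n \<Rightarrow> real) \<Rightarrow> (real^'n \<Rightarrow> real) \<Rightarrow> real \<Rightarrow> real^'n \<Rightarrow> real" where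
  "hhat g ix W h K vpi q =
     oint 0 (q $ ix) (\<lambda>t. ufun g ix W h K (upd ix q t))
     + vpi / 2 * (\<Sum>a\<in>UNIV - {ix}. (q $ a)^2)"

definition kinetic_eq :: "(real^'n) set \<Rightarrow> (real^'n \<Rightarrow> real^'n^'n) \<Rightarrow> 'n
     \<Rightarrow> (real^'n \<Rightarrow> (real^'n) set) \<Rightarrow> (real^'n \<Rightarrow> real) \<Rightarrow> bool" where
  "kinetic_eq \<Omega> g ix W K \<longleftrightarrow>
     (\<forall>q\<in>\<Omega>. \<forall>\<sigma>\<in>What g ix q. poisson (KP g ix W K) (hamil g) q \<sigma> = 0)"

definition potential_eq :: "(real^'n) set \<Rightarrow> (real^'n \<Rightarrow> real^'n^'n) \<Rightarrow> 'n
     \<Rightarrow> (real^'n \<Rightarrow> (real^'n) set) \<Rightarrow> (real^'n \<Rightarrow> real) \<Rightarrow> (real^'n \<Rightarrow> real)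
     \<Rightarrow> (real^'n \<Rightarrow> real) \<Rightarrow> bool" where
  "potential_eq \<Omega> g ix W h K f \<longleftrightarrow>
     (\<forall>q\<in>\<Omega>. \<forall>\<sigma>\<in>What g ix q.
        dcomp f (FH g) q \<sigma> - dcomp h (fib_deriv (KP g ix W K)) q \<sigma> = 0)"

definition hessian :: "(real^'n \<Rightarrow> real) \<Rightarrow> real^'n \<Rightarrow> real^'n^'n" where
  "hessian f q = (\<chi> i j. partial (partial f j) i q)"

definition pos_def :: "real^'n^'n \<Rightarrow> bool" where
  "pos_def A \<longleftrightarrow> (\<forall>v. v \<noteq> 0 \<longrightarrow> v \<bullet> (A *v v) > 0)"

end

theory Submission
  imports Defs
begin

text \<open>
  The complement \<open>What\<close> is the line spanned by \<open>s1 = g *v axis ix 1\<close>, and the fiber derivative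
  of the Hamiltonian maps \<open>c *\<^sub>R s1\<close> to \<open>c *\<^sub>R axis ix 1\<close>. Evaluating the canonical bracket
  on \<open>c *\<^sub>R s1\<close> gives \<open>c\<^sup>3/2 * (\<partial>\<^sub>x K + K * G)\<close>, so the kinetic equation is the linear
  transport equation \<open>\<partial>\<^sub>x K = - G * K\<close> along the lines on which only \<open>x\<close> varies; its positive
  solutions are those for which \<open>K * exp (\<integral>\<^sub>0\<^sup>x G)\<close> is constant along these lines.
  In the same way the potential equation on \<open>c *\<^sub>R s1\<close> reads \<open>c * (\<partial>\<^sub>x f - u) = 0\<close>, so it only
  prescribes \<open>\<partial>\<^sub>x f = u\<close>, which \<open>hhat\<close> satisfies by the fundamental theorem of calculus.
  At a critical point of \<open>h\<close> we have \<open>u 0 = 0\<close>, and the Hessian of \<open>hhat\<close> at \<open>0\<close> is the matrix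
  bordered by the gradient of \<open>u\<close> with \<open>vpi\<close> times the identity in the \<open>y\<close>-block; by completing the
  square (a Schur complement argument) it is positive definite under the stated bounds. Conversely,
  its \<open>(x, x)\<close> entry is \<open>\<partial>\<^sub>x u(0)\<close> for every solution of the potential equation.
\<close>

section \<open>Partial derivatives along the coordinate axes\<close>

lemma partial_eqI:
  assumes "((\<lambda>t. f (p + t *\<^sub>R axis i 1)) has_real_derivative D) (at 0)"
  shows "partial f i p = D"
  using assms unfolding partial_def by (rule DERIV_imp_deriv)

lemma partial_const [simp]: "partial (\<lambda>p. a) i q = 0"
  by (rule partial_eqI) simp

lemma partial_eq_0_of_critical:
  assumes "(f has_derivative (\<lambda>v. 0)) (at x)"
  shows "partial f i x = 0"
proof -
  have "((\<lambda>t::real. x + t *\<^sub>R axis i (1::real)) has_derivative (\<lambda>t. t *\<^sub>R axis i 1)) (at 0)"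
    by (auto intro!: derivative_eq_intros)
  from has_derivative_compose[OF this, of f "\<lambda>v. 0"] assms
  have "((\<lambda>t. f (x + t *\<^sub>R axis i 1)) has_derivative (\<lambda>t. 0)) (at 0)" by simp
  moreover have "(\<lambda>t. 0) = (*) (0::real)" by auto
  ultimately have "((\<lambda>t. f (x + t *\<^sub>R axis i 1)) has_real_derivative 0) (at 0)"
    by (simp add: has_field_derivative_def)
  then show ?thesis by (rule partial_eqI)
qed

lemma eventually_line_in_open:
  assumes "open U" "x \<in> U"
  shows "eventually (\<lambda>t. x + t *\<^sub>R (v::real^'n) \<in> U) (nhds (0::real))"
proof -
  have "open ((\<lambda>t::real. x + t *\<^sub>R v) -` U)"
    using assms(1) by (intro open_vimage continuous_intros)
  then show ?thesis
    using assms(2) eventually_nhds_in_open[of "(\<lambda>t::real. x + t *\<^sub>R v) -` U" 0] by simp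
qed

lemma partial_cong_open:
  assumes "open U" "x \<in> U" "\<And>y. y \<in> U \<Longrightarrow> f y = f0 y"
  shows "partial f i x = partial f0 i x"
  unfolding partial_def
  by (rule deriv_cong_ev[OF eventually_mono[OF eventually_line_in_open[OF assms(1,2), of "axis i 1"]]])
     (auto simp: assms(3))

lemma DERIV_line_cong_open:
  fixes x :: "real^'n"
  assumes "open U" "x \<in> U" "\<And>y. y \<in> U \<Longrightarrow> f y = f0 y"
   and "((\<lambda>t. f0 (x + t *\<^sub>R v)) has_real_derivative D) (at 0)"
  shows "((\<lambda>t. f (x + t *\<^sub>R v)) has_real_derivative D) (at 0)"
  using assms(4)
  by (subst DERIV_cong_ev[OF refl eventually_mono[OF eventually_line_in_open[OF assms(1,2), of v]] refl])
     (auto simp: assms(3))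

definition C1_on :: "(real^'n) set \<Rightarrow> (real^'n \<Rightarrow> real) \<Rightarrow> bool" where
  "C1_on S f \<longleftrightarrow> continuous_on S f \<and> (\<forall>i. continuous_on S (partial f i) \<and>
     (\<forall>p\<in>S. ((\<lambda>t. f (p + t *\<^sub>R axis i 1)) has_real_derivative partial f i p) (at 0)))"

lemma C1_onI:
  assumes "continuous_on S f"
    and "\<And>i. \<exists>f'. continuous_on S f' \<and>
           (\<forall>p\<in>S. ((\<lambda>t. f (p + t *\<^sub>R axis i 1)) has_real_derivative f' p) (at 0))"
  shows "C1_on S f"
  unfolding C1_on_def
proof (intro conjI allI assms ballI)
  fix i
  obtain f' where f': "continuous_on S f'"
    "\<forall>p\<in>S. ((\<lambda>t. f (p + t *\<^sub>R axis i 1)) has_real_derivative f' p) (at 0)"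
    using assms(2) by blast
  have eq: "\<forall>p\<in>S. partial f i p = f' p" using f'(2) partial_eqI by blast
  show "continuous_on S (partial f i)" using f'(1) continuous_on_cong eq by blast
  fix p assume "p \<in> S"
  thus "((\<lambda>t. f (p + t *\<^sub>R axis i 1)) has_real_derivative partial f i p) (at 0)"
    using f' eq by simp
qed

lemma C1_on_continuous: "C1_on S f \<Longrightarrow> continuous_on S f"
  by (simp add: C1_on_def)

lemma C1_on_partial_continuous: "C1_on S f \<Longrightarrow> continuous_on S (partial f i)"
  by (simp add: C1_on_def)

lemma C1_on_DERIV:
  "C1_on S f \<Longrightarrow> p \<in> S \<Longrightarrow> ((\<lambda>t. f (p + t *\<^sub>R axis i 1)) has_real_derivative partial f i p) (at 0)"
  by (simp add: C1_on_def)

lemma C1_on_DERIV_at: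
  assumes "C1_on S f" "p + s *\<^sub>R axis a 1 \<in> S"
  shows "((\<lambda>s'. f (p + s' *\<^sub>R axis a 1)) has_real_derivative partial f a (p + s *\<^sub>R axis a 1)) (at s)"
proof -
  have "(p + s *\<^sub>R axis a 1) + x *\<^sub>R axis a 1 = p + (x + s) *\<^sub>R axis a 1" for x
    by (simp add: algebra_simps scaleR_add_left)
  then have "((\<lambda>x. f (p + (x + s) *\<^sub>R axis a 1)) has_real_derivative
               partial f a (p + s *\<^sub>R axis a 1)) (at 0)"
    using C1_on_DERIV[OF assms, of a] by (simp only:)
  then show ?thesis using DERIV_shift[of "\<lambda>s'. f (p + s' *\<^sub>R axis a 1)" _ 0 s] by simp
qed

lemma C1_on_subset: "C1_on S f \<Longrightarrow> T \<subseteq> S \<Longrightarrow> C1_on T f"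
  unfolding C1_on_def by (meson continuous_on_subset subsetD)

lemma C1_on_const: "C1_on S (\<lambda>p. c)"
  by (rule C1_onI) (auto intro!: exI[of _ "\<lambda>p. 0"])

lemma C1_on_add:
  assumes "C1_on S f" "C1_on S g"
  shows "C1_on S (\<lambda>p. f p + g p)"
proof (rule C1_onI)
  show "continuous_on S (\<lambda>p. f p + g p)"
    using assms by (auto intro!: continuous_intros dest: C1_on_continuous)
  show "\<exists>f'. continuous_on S f' \<and> (\<forall>p\<in>S.
          ((\<lambda>t. f (p + t *\<^sub>R axis i 1) + g (p + t *\<^sub>R axis i 1)) has_real_derivative f' p) (at 0))" for i
    using assms
    by (intro exI[of _ "\<lambda>p. partial f i p + partial g i p"])
       (auto intro!: continuous_intros derivative_intros dest: C1_on_partial_continuous C1_on_DERIV)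
qed

lemma C1_on_mult:
  assumes f: "C1_on S f" and g: "C1_on S g"
  shows "C1_on S (\<lambda>p. f p * g p)"
proof (rule C1_onI)
  show "continuous_on S (\<lambda>p. f p * g p)"
    using assms by (auto intro!: continuous_intros dest: C1_on_continuous)
  fix i
  have "((\<lambda>t. f (p + t *\<^sub>R axis i 1) * g (p + t *\<^sub>R axis i 1)) has_real_derivative
          partial f i p * g p + f p * partial g i p) (at 0)" if "p \<in> S" for p
    using DERIV_mult[OF C1_on_DERIV[OF f that] C1_on_DERIV[OF g that]] by (simp add: mult.commute)
  moreover have "continuous_on S (\<lambda>p. partial f i p * g p + f p * partial g i p)"
    using assms by (auto intro!: continuous_intros dest: C1_on_partial_continuous C1_on_continuous)
  ultimately show "\<exists>f'. continuous_on S f' \<and> (\<forall>p\<in>S.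
          ((\<lambda>t. f (p + t *\<^sub>R axis i 1) * g (p + t *\<^sub>R axis i 1)) has_real_derivative f' p) (at 0))"
    by blast
qed

lemma C1_on_divide:
  assumes f: "C1_on S f" and g: "C1_on S g" and nz: "\<forall>p\<in>S. g p \<noteq> 0"
  shows "C1_on S (\<lambda>p. f p / g p)"
proof (rule C1_onI)
  show "continuous_on S (\<lambda>p. f p / g p)"
    using assms by (auto intro!: continuous_intros dest: C1_on_continuous)
  fix i
  have "((\<lambda>t. f (p + t *\<^sub>R axis i 1) / g (p + t *\<^sub>R axis i 1)) has_real_derivative
          (partial f i p * g p - f p * partial g i p) / (g p * g p)) (at 0)" if "p \<in> S" for p
    using DERIV_divide[OF C1_on_DERIV[OF f that] C1_on_DERIV[OF g that]] nz that by simp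
  moreover have "continuous_on S (\<lambda>p. (partial f i p * g p - f p * partial g i p) / (g p * g p))"
    using assms by (auto intro!: continuous_intros dest: C1_on_partial_continuous C1_on_continuous)
  ultimately show "\<exists>f'. continuous_on S f' \<and> (\<forall>p\<in>S.
          ((\<lambda>t. f (p + t *\<^sub>R axis i 1) / g (p + t *\<^sub>R axis i 1)) has_real_derivative f' p) (at 0))"
    by blast
qed

lemma C1_on_sum:
  "finite A \<Longrightarrow> (\<And>x. x \<in> A \<Longrightarrow> C1_on S (f x)) \<Longrightarrow> C1_on S (\<lambda>p. \<Sum>x\<in>A. f x p)"
  by (induction A rule: finite_induct) (auto intro: C1_on_const C1_on_add)

lemma C1_on_prod:
  "finite A \<Longrightarrow> (\<And>x. x \<in> A \<Longrightarrow> C1_on S (f x)) \<Longrightarrow> C1_on S (\<lambda>p. \<Prod>x\<in>A. f x p)"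
  by (induction A rule: finite_induct) (auto intro: C1_on_const C1_on_mult)

lemma C1_on_det:
  fixes M :: "real^'n \<Rightarrow> real^'m::finite^'m"
  assumes "\<And>i j. C1_on S (\<lambda>p. M p $ i $ j)"
  shows "C1_on S (\<lambda>p. det (M p))"
  unfolding det_def by (intro C1_on_sum C1_on_mult C1_on_const C1_on_prod assms) auto

lemma C1_on_local:
  assumes S: "open S"
    and loc: "\<And>p. p \<in> S \<Longrightarrow> \<exists>V f0. open V \<and> p \<in> V \<and> C1_on (V \<inter> S) f0 \<and> (\<forall>x\<in>V \<inter> S. f x = f0 x)"
  shows "C1_on S f"
proof -
  have "isCont f p \<and> isCont (partial f i) p \<and>
        ((\<lambda>t. f (p + t *\<^sub>R axis i 1)) has_real_derivative partial f i p) (at 0)"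
    if p: "p \<in> S" for p i
  proof -
    obtain V f0 where V: "open V" "p \<in> V" "C1_on (V \<inter> S) f0" "\<forall>x\<in>V \<inter> S. f x = f0 x"
      using loc[OF p] by blast
    have o: "open (V \<inter> S)" and pV: "p \<in> V \<inter> S" using V(1,2) S p by auto
    have ev: "eventually (\<lambda>x. x \<in> V \<inter> S) (nhds p)" by (rule eventually_nhds_in_open[OF o pV])
    have eq: "partial f i x = partial f0 i x" if "x \<in> V \<inter> S" for x
      by (rule partial_cong_open[OF o that]) (use V(4) in blast)
    have "isCont f0 p"
      using C1_on_continuous[OF V(3)] o pV continuous_on_eq_continuous_at by blast
    moreover have "isCont (partial f0 i) p"
      using C1_on_partial_continuous[OF V(3)] o pV continuous_on_eq_continuous_at by blast
    moreover have "eventually (\<lambda>x. f x = f0 x) (nhds p)"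
      by (rule eventually_mono[OF ev]) (use V(4) in blast)
    moreover have "eventually (\<lambda>x. partial f i x = partial f0 i x) (nhds p)"
      by (rule eventually_mono[OF ev eq])
    moreover have "((\<lambda>t. f (p + t *\<^sub>R axis i 1)) has_real_derivative partial f0 i p) (at 0)"
      by (rule DERIV_line_cong_open[OF o pV _ C1_on_DERIV[OF V(3) pV]]) (use V(4) in blast)
    ultimately show ?thesis using isCont_cong eq[OF pV] by auto
  qed
  then show ?thesis
    unfolding C1_on_def continuous_on_eq_continuous_at[OF S] by simp
qed

lemma C1_on_cong_open:
  assumes "open S" "\<And>p. p \<in> S \<Longrightarrow> f p = f0 p" "C1_on S f0"
  shows "C1_on S f"
  using assms by (intro C1_on_local) (auto intro!: exI[of _ UNIV])

lemma smooth_on_imp_C1_on_pd: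
  assumes "smooth_on S f"
  shows "C1_on S (pd f is)"
  unfolding C1_on_def
proof (intro conjI allI ballI)
  show "continuous_on S (pd f is)" "continuous_on S (partial (pd f is) i)" for i
    using assms unfolding smooth_on_def by (metis pd.simps(2))+
  fix i p assume "p \<in> S"
  then have "(\<lambda>t. pd f is (p + t *\<^sub>R axis i 1)) field_differentiable (at 0)"
    using assms unfolding smooth_on_def by blast
  then show "((\<lambda>t. pd f is (p + t *\<^sub>R axis i 1)) has_real_derivative partial (pd f is) i p) (at 0)"
    unfolding partial_def using DERIV_deriv_iff_field_differentiable by blast
qed

lemma smooth_on_imp_C1_on: "smooth_on S f \<Longrightarrow> C1_on S f"
  using smooth_on_imp_C1_on_pd[of S f "[]"] by simp

lemma smooth_on_imp_C1_on_partial: "smooth_on S f \<Longrightarrow> C1_on S (partial f j)"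
  using smooth_on_imp_C1_on_pd[of S f "[j]"] by simp

section \<open>Freezing and integrating the distinguished coordinate\<close>

lemma upd_self [simp]: "upd ix q (q $ ix) = q"
  by (simp add: vec_eq_iff upd_def)

lemma upd_upd [simp]: "upd ix (upd ix q s) t = upd ix q t"
  by (simp add: vec_eq_iff upd_def)

lemma upd_nth_ix [simp]: "upd ix q t $ ix = t"
  by (simp add: upd_def)

lemma upd_line: "upd ix (q + s *\<^sub>R axis ix 1) = upd ix q"
  by (auto simp: fun_eq_iff vec_eq_iff upd_def axis_def)

lemma upd_add: "upd ix q (t + s) = upd ix q t + s *\<^sub>R axis ix 1"
  by (auto simp: vec_eq_iff upd_def axis_def)

lemma upd_transverse: "i \<noteq> ix \<Longrightarrow> upd ix (q + s *\<^sub>R axis i 1) t = upd ix q t + s *\<^sub>R axis i 1"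
  by (auto simp: vec_eq_iff upd_def axis_def)

lemma continuous_on_upd: "continuous_on T (upd ix q)"
proof -
  have e: "upd ix q = (\<lambda>t. upd ix q 0 + t *\<^sub>R axis ix 1)"
    by (auto simp: fun_eq_iff vec_eq_iff upd_def axis_def)
  show ?thesis by (subst e) (intro continuous_intros)
qed

lemma continuous_on_upd_0: "continuous_on S (\<lambda>q. upd ix q 0)"
  unfolding upd_def
proof (intro continuous_on_vec_lambda)
  show "continuous_on S (\<lambda>x. if k = ix then 0 else x $ k)" for k
    by (cases "k = ix") (auto intro!: continuous_intros linear_continuous_on bounded_linear_vec_nth)
qed

lemma norm_upd_le: "\<bar>\<tau>\<bar> \<le> \<bar>y $ ix\<bar> \<Longrightarrow> norm (upd ix y \<tau>) \<le> norm y"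
  by (rule norm_le_componentwise_cart) (auto simp: upd_def)

lemma DERIV_upd_of_DERIV_line:
  assumes "((\<lambda>s. f (upd ix q t + s *\<^sub>R axis ix 1)) has_real_derivative D) (at 0)"
  shows "((\<lambda>\<tau>. f (upd ix q \<tau>)) has_real_derivative D) (at t)"
proof -
  have "upd ix q (s + t) = upd ix q t + s *\<^sub>R axis ix 1" for s
    by (metis add.commute upd_add)
  then show ?thesis using assms DERIV_shift[of "\<lambda>s. f (upd ix q s)" D 0 t] by simp
qed

lemma pd_comp_upd_0:
  "pd (\<lambda>q. K (upd ix q 0)) is = (if ix \<in> set is then (\<lambda>q. 0) else (\<lambda>q. pd K is (upd ix q 0)))"
proof (induction "is")
  case (Cons i "is")
  show ?case
  proof (cases "ix \<in> set is")
    case True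
    then show ?thesis using Cons by (simp add: partial_def fun_eq_iff)
  next
    case False
    then have e: "pd (\<lambda>q. K (upd ix q 0)) is = (\<lambda>q. pd K is (upd ix q 0))" using Cons by simp
    show ?thesis
    proof (cases "i = ix")
      case True
      then show ?thesis by (simp add: e fun_eq_iff partial_def upd_line)
    next
      case False
      then have "partial (\<lambda>q. pd K is (upd ix q 0)) i q = partial (pd K is) i (upd ix q 0)" for q
        unfolding partial_def by (simp add: upd_transverse)
      then show ?thesis using False \<open>ix \<notin> set is\<close> by (simp add: e fun_eq_iff)
    qed
  qed
qed simp

lemma smooth_on_comp_upd_0:
  fixes K :: "real^'n \<Rightarrow> real"
  assumes K: "smooth_on S K" and S: "\<And>q. q \<in> S \<Longrightarrow> upd ix q 0 \<in> S"
  shows "smooth_on S (\<lambda>q. K (upd ix q 0))"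
  unfolding smooth_on_def
proof (intro allI conjI ballI)
  fix "is" :: "'n list"
  have "continuous_on S (\<lambda>q. pd K is (upd ix q 0))"
    using K S unfolding smooth_on_def
    by (intro continuous_on_compose2[OF _ continuous_on_upd_0]) auto
  then show "continuous_on S (pd (\<lambda>q. K (upd ix q 0)) is)"
    by (simp add: pd_comp_upd_0)
  fix i q assume q: "q \<in> S"
  show "(\<lambda>t. pd (\<lambda>q. K (upd ix q 0)) is (q + t *\<^sub>R axis i 1)) field_differentiable at 0"
  proof (cases "ix \<in> set is \<or> i = ix")
    case True
    then show ?thesis by (auto simp: pd_comp_upd_0 upd_line)
  next
    case False
    have "\<forall>j. \<forall>p\<in>S. (\<lambda>t. pd K is (p + t *\<^sub>R axis j 1)) field_differentiable at 0"
      using K unfolding smooth_on_def by blast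
    then have "(\<lambda>t. pd K is (upd ix q 0 + t *\<^sub>R axis i 1)) field_differentiable at 0"
      using S[OF q] by blast
    then show ?thesis using False by (simp add: pd_comp_upd_0 upd_transverse)
  qed
qed

lemma DERIV_transverse_sum_power2:
  "((\<lambda>t. \<Sum>c\<in>UNIV - {ix}. ((q + t *\<^sub>R axis i 1) $ c)^2) has_real_derivative
     (if i = ix then 0 else 2 * q $ i)) (at 0)"
proof -
  have D: "((\<lambda>t. \<Sum>c\<in>UNIV - {ix}. ((q + t *\<^sub>R axis i 1) $ c)^2) has_real_derivative
          (\<Sum>c\<in>UNIV - {ix}. 2 * (axis i 1 $ c * q $ c))) (at 0)"
    by (auto intro!: derivative_eq_intros)
  have "(\<Sum>c\<in>UNIV - {ix}. 2 * (axis i 1 $ c * q $ c))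
      = (\<Sum>c\<in>UNIV - {ix}. if c = i then 2 * q $ i else 0)"
    by (rule sum.cong) (auto simp: axis_def)
  also have "\<dots> = (if i = ix then 0 else 2 * q $ i)"
    by simp
  finally show ?thesis using D by (simp only:)
qed

lemma oint_same [simp]: "oint a a f = 0"
  by (simp add: oint_def)

lemma oint_split:
  fixes f :: "real \<Rightarrow> real"
  assumes "continuous_on {c..d} f" "c \<le> 0" "0 \<le> d" "t \<in> {c..d}"
  shows "oint 0 t f = integral {c..t} f - integral {c..0} f"
proof (cases "0 \<le> t")
  case True
  have "f integrable_on {c..t}"
    using assms by (intro integrable_continuous_real continuous_on_subset[OF assms(1)]) auto
  then have "integral {c..0} f + integral {0..t} f = integral {c..t} f"
    using assms True Henstock_Kurzweil_Integration.integral_combine[where a=c and c=0 and b=t]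
    by auto
  then show ?thesis using True by (simp add: oint_def)
next
  case False
  have "f integrable_on {c..0}"
    using assms by (intro integrable_continuous_real continuous_on_subset[OF assms(1)]) auto
  then have "integral {c..t} f + integral {t..0} f = integral {c..0} f"
    using assms False Henstock_Kurzweil_Integration.integral_combine[where a=c and c=t and b=0]
    by auto
  then show ?thesis using False by (simp add: oint_def)
qed

lemma oint_DERIV:
  fixes f :: "real \<Rightarrow> real"
  assumes cont: "continuous_on {a<..<b} f" and ab: "a < 0" "0 < b" and x: "x \<in> {a<..<b}"
  shows "((\<lambda>t. oint 0 t f) has_real_derivative f x) (at x)"
proof -
  define c where "c = (a + min 0 x) / 2"
  define d where "d = (b + max 0 x) / 2"
  have cd: "a < c" "c < min 0 x" "max 0 x < d" "d < b" using ab x by (auto simp: c_def d_def)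
  have cc: "continuous_on {c..d} f" using cd by (intro continuous_on_subset[OF cont]) auto
  have "((\<lambda>t. integral {c..t} f) has_real_derivative f x) (at x within {c..d})"
    using cd by (intro integral_has_real_derivative cc) auto
  then have "((\<lambda>t. integral {c..t} f) has_real_derivative f x) (at x within {c<..<d})"
    by (rule DERIV_subset) auto
  moreover have "at x within {c<..<d} = at x" using cd by (intro at_within_open) auto
  ultimately have "((\<lambda>t. integral {c..t} f) has_real_derivative f x) (at x)"
    by simp
  then have D: "((\<lambda>t. integral {c..t} f - integral {c..0} f) has_real_derivative f x) (at x)"
    using DERIV_diff[OF _ DERIV_const[of "integral {c..0} f"]] by simp
  have ev: "eventually (\<lambda>t. t \<in> {c<..<d}) (nhds x)"
    using cd by (intro eventually_nhds_in_open) auto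
  have eq: "\<And>t. t \<in> {c<..<d} \<Longrightarrow> oint 0 t f = integral {c..t} f - integral {c..0} f"
    using cd by (intro oint_split[OF cc]) auto
  show ?thesis
    by (rule DERIV_cong_ev[OF refl eventually_mono[OF ev] refl, THEN iffD2, OF _ D])
       (simp add: eq)
qed

lemma oint_bound:
  fixes f :: "real \<Rightarrow> real"
  assumes "continuous_on (closed_segment 0 t) f" "\<And>s. s \<in> closed_segment 0 t \<Longrightarrow> \<bar>f s\<bar> \<le> B"
  shows "\<bar>oint 0 t f\<bar> \<le> B * \<bar>t\<bar>"
proof (cases "0 \<le> t")
  case True
  then have cs: "closed_segment 0 t = {0..t}" by (simp add: closed_segment_eq_real_ivl)
  have "norm (integral {0..t} f) \<le> B * (t - 0)"
    using assms True by (intro integral_bound) (auto simp: cs)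
  then show ?thesis using True by (simp add: oint_def)
next
  case False
  then have cs: "closed_segment 0 t = {t..0}" by (simp add: closed_segment_eq_real_ivl)
  have "norm (integral {t..0} f) \<le> B * (0 - t)"
    using assms False by (intro integral_bound) (auto simp: cs)
  then show ?thesis using False by (simp add: oint_def)
qed

lemma oint_param_DERIV:
  fixes F Fs :: "real \<Rightarrow> real \<Rightarrow> real"
  assumes U: "open U" "0 \<in> U" "convex U"
    and d: "\<And>s \<tau>. s \<in> U \<Longrightarrow> \<tau> \<in> closed_segment 0 t \<Longrightarrow> ((\<lambda>s. F s \<tau>) has_real_derivative Fs s \<tau>) (at s)"
    and cF: "\<And>s. s \<in> U \<Longrightarrow> continuous_on (closed_segment 0 t) (F s)"
    and cFs: "continuous_on (U \<times> closed_segment 0 t) (\<lambda>(s, \<tau>). Fs s \<tau>)"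
  shows "((\<lambda>s. oint 0 t (F s)) has_real_derivative oint 0 t (Fs 0)) (at 0)"
proof -
  define c d where "c = min 0 t" and "d = max 0 t"
  have cs: "closed_segment 0 t = cbox c d"
    by (simp add: c_def d_def closed_segment_eq_real_ivl)
  have "((\<lambda>s. integral (cbox c d) (F s)) has_field_derivative integral (cbox c d) (Fs 0))
          (at 0 within U)"
  proof (rule leibniz_rule_field_derivative[OF _ _ _ U(2,3)])
    show "((\<lambda>s. F s \<tau>) has_field_derivative Fs s \<tau>) (at s within U)" if "s \<in> U" "\<tau> \<in> cbox c d" for s \<tau>
      using d that cs by (auto intro: has_field_derivative_at_within)
    show "F s integrable_on cbox c d" if "s \<in> U" for s
      using cF[OF that] cs by (metis integrable_continuous)
    show "continuous_on (U \<times> cbox c d) (\<lambda>(s, \<tau>). Fs s \<tau>)" using cFs cs by simp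
  qed
  then have "((\<lambda>s. integral {c..d} (F s)) has_field_derivative integral {c..d} (Fs 0)) (at 0)"
    using at_within_open[OF U(2,1)] by simp
  then show ?thesis
    by (cases "0 \<le> t") (auto simp: oint_def c_def d_def intro: DERIV_minus)
qed

definition coord_primitive :: "'n \<Rightarrow> (real^'n \<Rightarrow> real) \<Rightarrow> real^'n \<Rightarrow> real" where
  "coord_primitive ix F q = oint 0 (q $ ix) (\<lambda>t. F (upd ix q t))"

lemma coord_primitive_hyperplane: "q $ ix = 0 \<Longrightarrow> coord_primitive ix F q = 0"
  by (simp add: coord_primitive_def)

lemma coord_primitive_line:
  "coord_primitive ix F (q + s *\<^sub>R axis ix 1) = oint 0 (q $ ix + s) (\<lambda>t. F (upd ix q t))"
  by (simp add: coord_primitive_def upd_line)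

lemma coord_primitive_has_derivative_0:
  fixes F :: "real^'n \<Rightarrow> real"
  assumes S: "open S" "0 \<in> S" and F: "continuous_on S F" "F 0 = 0"
  shows "(coord_primitive ix F has_derivative (\<lambda>v. 0)) (at 0)"
  unfolding has_derivative_at_alt
proof (intro conjI allI impI)
  show "bounded_linear (\<lambda>v::real^'n. 0::real)" by simp
  fix e :: real assume e: "e > 0"
  have "isCont F 0" using F(1) S continuous_on_eq_continuous_at by blast
  then obtain d1 where d1: "d1 > 0" "\<And>x. dist x 0 < d1 \<Longrightarrow> \<bar>F x\<bar> < e"
    using e F(2) unfolding continuous_at_eps_delta by (metis dist_real_def diff_zero)
  obtain d2 where d2: "d2 > 0" "ball 0 d2 \<subseteq> S" using S open_contains_ball by blast
  show "\<exists>d>0. \<forall>y. norm (y - 0) < d \<longrightarrow>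
          norm (coord_primitive ix F y - coord_primitive ix F 0 - 0) \<le> e * norm (y - 0)"
  proof (intro exI[of _ "min d1 d2"] conjI allI impI)
    fix y :: "real^'n" assume y: "norm (y - 0) < min d1 d2"
    have small: "norm (upd ix y \<tau>) < min d1 d2" if "\<tau> \<in> closed_segment 0 (y $ ix)" for \<tau>
    proof -
      have "\<bar>\<tau>\<bar> \<le> \<bar>y $ ix\<bar>"
        using that by (cases "0 \<le> y $ ix") (auto simp: closed_segment_eq_real_ivl)
      then show ?thesis using norm_upd_le y by (metis diff_zero le_less_trans)
    qed
    have "continuous_on (closed_segment 0 (y $ ix)) (\<lambda>\<tau>. F (upd ix y \<tau>))"
      by (rule continuous_on_compose2[OF F(1) continuous_on_upd]) (use small d2 in force)
    then have "\<bar>coord_primitive ix F y\<bar> \<le> e * \<bar>y $ ix\<bar>"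
      unfolding coord_primitive_def
      by (rule oint_bound) (use small d1 in \<open>force intro: less_imp_le\<close>)
    also have "\<dots> \<le> e * norm y" using e component_le_norm_cart[of y ix] by simp
    finally show "norm (coord_primitive ix F y - coord_primitive ix F 0 - 0) \<le> e * norm (y - 0)"
      by (simp add: coord_primitive_hyperplane)
  qed (use d1 d2 in auto)
qed

section \<open>Bordered quadratic forms\<close>

lemma matrix_vector_mult_axis_nth: "(A *v axis j 1) $ k = A $ k $ j" for A :: "real^'n^'m"
  by (simp add: matrix_vector_mult_def axis_def if_distrib cong: if_cong)

lemma matrix_vector_mult_nth: "(A *v x) $ j = (\<Sum>k\<in>UNIV. A $ j $ k * x $ k)" for A :: "real^'n^'m"
  by (simp add: matrix_vector_mult_def)

lemma inner_matrix_vector_transpose: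
  "(x::real^'n) \<bullet> (A *v y) = (transpose A *v x) \<bullet> y" for A :: "real^'n^'n"
  by (simp add: inner_vec_def matrix_vector_mult_def transpose_def sum_distrib_left
      sum_distrib_right mult_ac) (rule sum.swap)

lemma Schur_complement_quadratic_pos:
  fixes a d x :: real and b v :: "'i \<Rightarrow> real"
  assumes I: "finite I" and a: "a > 0" and d: "d > (\<Sum>i\<in>I. (b i)^2) / a"
    and nz: "x \<noteq> 0 \<or> (\<exists>i\<in>I. v i \<noteq> 0)"
  shows "a * x^2 + 2 * x * (\<Sum>i\<in>I. b i * v i) + d * (\<Sum>i\<in>I. (v i)^2) > 0"
proof -
  define S B Y where "S = (\<Sum>i\<in>I. (b i)^2)" and "B = (\<Sum>i\<in>I. b i * v i)"
    and "Y = (\<Sum>i\<in>I. (v i)^2)"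
  have CS: "B^2 \<le> S * Y" unfolding B_def S_def Y_def by (rule Cauchy_Schwarz_ineq_sum)
  have "Y \<ge> 0" unfolding Y_def by (simp add: sum_nonneg)
  have dS: "d * a > S" using d a by (simp add: S_def pos_divide_less_eq)
  have complete_square: "a * (a * x^2 + 2 * x * B + d * Y) = (a * x + B)^2 + (a * d * Y - B^2)"
    by (simp add: power2_eq_square algebra_simps)
  show ?thesis
  proof (cases "Y = 0")
    case True
    then have "B = 0" using CS by simp
    moreover have "\<forall>i\<in>I. v i = 0" using True I unfolding Y_def by (subst (asm) sum_nonneg_eq_0_iff) auto
    ultimately show ?thesis using nz a True by (simp add: B_def[symmetric] Y_def[symmetric])
  next
    case False
    then have "S * Y < d * a * Y" using dS \<open>Y \<ge> 0\<close> by simp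
    then have "a * d * Y - B^2 > 0" using CS by (simp add: algebra_simps)
    then have "a * (a * x^2 + 2 * x * B + d * Y) > 0" unfolding complete_square
      by (smt (verit) zero_le_power2)
    then show ?thesis using a by (simp add: B_def[symmetric] Y_def[symmetric] zero_less_mult_iff)
  qed
qed

lemma quadratic_form_bordered:
  fixes A :: "real^'n^'n"
  assumes col: "\<And>i. A $ i $ ix = b i" and row: "\<And>a. a \<noteq> ix \<Longrightarrow> A $ ix $ a = b a"
    and diag: "\<And>a c. a \<noteq> ix \<Longrightarrow> c \<noteq> ix \<Longrightarrow> A $ a $ c = (if a = c then d else 0)"
  shows "v \<bullet> (A *v v) = b ix * (v $ ix)^2 + 2 * v $ ix * (\<Sum>a\<in>UNIV - {ix}. b a * v $ a)
                        + d * (\<Sum>a\<in>UNIV - {ix}. (v $ a)^2)"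
proof -
  have split: "(\<Sum>j\<in>UNIV. f j) = f ix + (\<Sum>j\<in>UNIV - {ix}. f j)" for f :: "'n \<Rightarrow> real"
    by (rule sum.remove) auto
  have rx: "(A *v v) $ ix = b ix * v $ ix + (\<Sum>j\<in>UNIV - {ix}. b j * v $ j)"
    unfolding matrix_vector_mult_nth split using col row by simp
  have ra: "(A *v v) $ a = b a * v $ ix + d * v $ a" if a: "a \<noteq> ix" for a
  proof -
    have "(\<Sum>j\<in>UNIV - {ix}. A $ a $ j * v $ j) = (\<Sum>j\<in>UNIV - {ix}. if j = a then d * v $ a else 0)"
      by (rule sum.cong) (auto simp: diag a)
    then show ?thesis unfolding matrix_vector_mult_nth split using col a by simp
  qed
  have "v \<bullet> (A *v v) = v $ ix * (A *v v) $ ix + (\<Sum>a\<in>UNIV - {ix}. v $ a * (A *v v) $ a)"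
    unfolding inner_vec_def split by simp
  also have "(\<Sum>a\<in>UNIV - {ix}. v $ a * (A *v v) $ a)
      = v $ ix * (\<Sum>a\<in>UNIV - {ix}. b a * v $ a) + d * (\<Sum>a\<in>UNIV - {ix}. (v $ a)^2)"
    by (simp add: ra sum.distrib sum_distrib_left power2_eq_square algebra_simps)
  finally show ?thesis
    unfolding rx by (simp add: power2_eq_square algebra_simps)
qed

lemma pos_def_bordered:
  fixes A :: "real^'n^'n"
  assumes "\<And>i. A $ i $ ix = b i" "\<And>a. a \<noteq> ix \<Longrightarrow> A $ ix $ a = b a"
    and "\<And>a c. a \<noteq> ix \<Longrightarrow> c \<noteq> ix \<Longrightarrow> A $ a $ c = (if a = c then d else 0)"
    and "b ix > 0" "d > (\<Sum>a\<in>UNIV - {ix}. (b a)^2) / b ix"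
  shows "pos_def A"
  unfolding pos_def_def
proof (intro allI impI)
  fix v :: "real^'n" assume "v \<noteq> 0"
  then have "v $ ix \<noteq> 0 \<or> (\<exists>a\<in>UNIV - {ix}. v $ a \<noteq> 0)"
    by (metis Diff_iff singletonD vec_eq_iff zero_index UNIV_I)
  then have "0 < b ix * (v $ ix)^2 + 2 * v $ ix * (\<Sum>a\<in>UNIV - {ix}. b a * v $ a)
                 + d * (\<Sum>a\<in>UNIV - {ix}. (v $ a)^2)"
    by (intro Schur_complement_quadratic_pos[where v="\<lambda>a. v $ a", OF _ assms(4,5)]) simp_all
  then show "0 < v \<bullet> (A *v v)"
    using quadratic_form_bordered[of A ix b d v] assms(1-3) by simp
qed

locale codim_one_chart =
  fixes ix :: "'n::finite" and lo hi :: "real^'n" and \<Omega> :: "(real^'n) set"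
    and g :: "real^'n \<Rightarrow> real^'n^'n" and W :: "real^'n \<Rightarrow> (real^'n) set"
    and h :: "real^'n \<Rightarrow> real"
  assumes \<Omega>_def: "\<Omega> = box lo hi"
    and box0: "\<forall>k. lo $ k < 0 \<and> 0 < hi $ k"
    and g_smooth: "\<forall>i j. smooth_on \<Omega> (\<lambda>q. g q $ i $ j)"
    and g_sym: "\<forall>q\<in>\<Omega>. transpose (g q) = g q"
    and g_pos: "\<forall>q\<in>\<Omega>. pos_def (g q)"
    and W_subspace: "\<forall>q\<in>\<Omega>. subspace (W q)"
    and W_compl: "\<forall>q\<in>\<Omega>. W q \<inter> What g ix q = {0}
                      \<and> {a + b | a b. a \<in> W q \<and> b \<in> What g ix q} = UNIV"
    and W_smooth: "\<forall>q\<in>\<Omega>. \<exists>V F. open V \<and> q \<in> V \<and>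
                     (\<forall>p\<in>V \<inter> \<Omega>. W p = span ((\<lambda>a. F a p) ` (UNIV - {ix}))) \<and>
                     (\<forall>a k. smooth_on V (\<lambda>p. (F a p :: real^'n) $ k))"
    and h_smooth: "smooth_on \<Omega> h"
begin

lemma open_\<Omega>: "open \<Omega>"
  by (simp add: \<Omega>_def open_box)

lemma zero_in_\<Omega>: "0 \<in> \<Omega>"
  using box0 by (simp add: \<Omega>_def mem_box_cart)

lemma coord_ix_in: "q \<in> \<Omega> \<Longrightarrow> q $ ix \<in> {lo $ ix<..<hi $ ix}"
  by (simp add: \<Omega>_def mem_box_cart)

lemma upd_in_\<Omega>: "q \<in> \<Omega> \<Longrightarrow> t \<in> {lo $ ix<..<hi $ ix} \<Longrightarrow> upd ix q t \<in> \<Omega>"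
  by (auto simp: \<Omega>_def mem_box_cart upd_def)

lemma upd_0_in_\<Omega>: "q \<in> \<Omega> \<Longrightarrow> upd ix q 0 \<in> \<Omega>"
  using box0 by (intro upd_in_\<Omega>) auto

lemma segment_in_coord_range:
  "q \<in> \<Omega> \<Longrightarrow> closed_segment 0 (q $ ix) \<subseteq> {lo $ ix<..<hi $ ix}"
  using coord_ix_in[of q] box0[rule_format, of ix]
  by (auto simp: closed_segment_eq_real_ivl split: if_splits)

lemma line_in_\<Omega>_iff:
  "q \<in> \<Omega> \<Longrightarrow> q + s *\<^sub>R axis a 1 \<in> \<Omega> \<longleftrightarrow> s \<in> {lo $ a - q $ a<..<hi $ a - q $ a}"
  by (auto simp: \<Omega>_def mem_box_cart axis_def)

lemma g_C1: "C1_on \<Omega> (\<lambda>q. g q $ i $ j)"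
  using g_smooth smooth_on_imp_C1_on by blast

subsection \<open>The projection onto \<open>What\<close>\<close>

abbreviation ginv where "ginv q \<equiv> matrix_inv (g q)"
abbreviation s1 where "s1 q \<equiv> sigma1 g ix q"

lemma g_ginv:
  assumes q: "q \<in> \<Omega>"
  shows "g q ** ginv q = mat 1" "ginv q ** g q = mat 1"
proof -
  have "inj ((*v) (g q))"
  proof (rule inj_onI)
    fix x y assume "g q *v x = g q *v y"
    then have "(x - y) \<bullet> (g q *v (x - y)) = 0" by (simp add: matrix_vector_mult_diff_distrib)
    then show "x = y" using g_pos q unfolding pos_def_def by (metis less_irrefl right_minus_eq)
  qed
  then obtain B' where "B' ** g q = mat 1" using matrix_left_invertible_injective by blast
  then have "invertible (g q)" unfolding invertible_def using matrix_left_right_inverse by blast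
  then show "g q ** ginv q = mat 1" "ginv q ** g q = mat 1"
    unfolding invertible_def matrix_inv_def by (metis (mono_tags, lifting) someI_ex)+
qed

lemma det_g_nonzero: "q \<in> \<Omega> \<Longrightarrow> det (g q) \<noteq> 0"
  using g_ginv invertible_def invertible_det_nz by blast

lemma ginv_symmetric:
  assumes q: "q \<in> \<Omega>"
  shows "transpose (ginv q) = ginv q"
proof -
  have gT: "transpose (ginv q) ** g q = mat 1"
    using g_ginv(1)[OF q] g_sym q by (metis matrix_transpose_mul transpose_mat)
  have "transpose (ginv q) = transpose (ginv q) ** (g q ** ginv q)" using g_ginv(1)[OF q] by simp
  also have "\<dots> = ginv q" by (simp add: matrix_mul_assoc gT)
  finally show ?thesis .
qed

lemma g_sym_nth:
  assumes "q \<in> \<Omega>"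
  shows "g q $ k $ j = g q $ j $ k"
proof -
  have "transpose (g q) $ j $ k = g q $ j $ k" using g_sym assms by simp
  then show ?thesis by (simp add: transpose_def)
qed

lemma Hc_eq: "Hc g q i j = g q $ j $ i"
  by (simp add: Hc_def matrix_vector_mult_axis_nth)

lemma s1_eq: "s1 q = g q *v axis ix 1"
  by (simp add: sigma1_def Hc_def vec_lambda_eta)

lemma s1_nth: "s1 q $ k = g q $ k $ ix"
  by (simp add: s1_eq matrix_vector_mult_axis_nth)

lemma ginv_s1: "q \<in> \<Omega> \<Longrightarrow> ginv q *v (c *\<^sub>R s1 q) = c *\<^sub>R axis ix 1"
  by (simp add: s1_eq matrix_vector_mul_assoc g_ginv matrix_vector_mult_scaleR)

lemma scale_s1_cancel: "q \<in> \<Omega> \<Longrightarrow> a *\<^sub>R s1 q = b *\<^sub>R s1 q \<longleftrightarrow> a = b"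
  using ginv_s1[of q 1] by (auto simp: scaleR_cancel_right axis_eq_0_iff)

lemma What_eq: "What g ix q = range (\<lambda>c. c *\<^sub>R s1 q)"
  by (simp add: What_def span_singleton s1_eq scalar_mult_eq_scaleR image_image
      matrix_vector_mult_scaleR)

lemma subspace_What: "subspace (What g ix q)"
proof -
  have "What g ix q = span {s1 q}" by (simp add: What_eq span_singleton scalar_mult_eq_scaleR)
  then show ?thesis by simp
qed

lemma phat_unique:
  assumes q: "q \<in> \<Omega>" and b: "\<beta> \<in> What g ix q" "\<alpha> - \<beta> \<in> W q"
  shows "phat g ix W q \<alpha> = \<beta>"
  unfolding phat_def
proof (rule the_equality)
  show "\<beta> \<in> What g ix q \<and> \<alpha> - \<beta> \<in> W q" using b by blast
  fix \<beta>' assume b': "\<beta>' \<in> What g ix q \<and> \<alpha> - \<beta>' \<in> W q"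
  have "\<beta> - \<beta>' \<in> W q" using subspace_diff[OF _ b'[THEN conjunct2] b(2)] W_subspace q by simp
  moreover have "\<beta> - \<beta>' \<in> What g ix q" using subspace_diff[OF subspace_What b(1) b'[THEN conjunct1]] .
  ultimately have "\<beta> - \<beta>' = 0" using W_compl q by blast
  then show "\<beta>' = \<beta>" by simp
qed

lemma phat_axis:
  assumes q: "q \<in> \<Omega>"
  shows "phat g ix W q (axis k 1) = Phat g ix W k q *\<^sub>R s1 q"
    and "axis k 1 - Phat g ix W k q *\<^sub>R s1 q \<in> W q"
proof -
  obtain a b where ab: "axis k 1 = a + b" "a \<in> W q" "b \<in> What g ix q" using W_compl q by blast
  then obtain c where c: "b = c *\<^sub>R s1 q" unfolding What_eq by blast
  have ph: "phat g ix W q (axis k 1) = c *\<^sub>R s1 q"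
    using phat_unique[OF q ab(3)] ab c by simp
  have "Phat g ix W k q = c"
    unfolding Phat_def ph by (rule the_equality) (use scale_s1_cancel[OF q] in auto)
  then show "phat g ix W q (axis k 1) = Phat g ix W k q *\<^sub>R s1 q"
    and "axis k 1 - Phat g ix W k q *\<^sub>R s1 q \<in> W q"
    using ph ab c by auto
qed

definition sigma_coeff where "sigma_coeff q \<alpha> = (\<Sum>k\<in>UNIV. \<alpha> $ k * Phat g ix W k q)"

lemma phat_eq_sigma_coeff:
  assumes q: "q \<in> \<Omega>"
  shows "phat g ix W q \<alpha> = sigma_coeff q \<alpha> *\<^sub>R s1 q"
proof (rule phat_unique[OF q])
  show "sigma_coeff q \<alpha> *\<^sub>R s1 q \<in> What g ix q" unfolding What_eq by (rule rangeI)
  have sW: "subspace (W q)" using W_subspace q by blast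
  have "\<alpha> = (\<Sum>k\<in>UNIV. (\<alpha> $ k) *\<^sub>R axis k (1::real))"
    using basis_expansion[of \<alpha>] by (simp add: scalar_mult_eq_scaleR)
  then have "\<alpha> - sigma_coeff q \<alpha> *\<^sub>R s1 q
      = (\<Sum>k\<in>UNIV. (\<alpha> $ k) *\<^sub>R (axis k 1 - Phat g ix W k q *\<^sub>R s1 q))"
    by (simp add: sigma_coeff_def scaleR_diff_right sum_subtractf scaleR_sum_left)
  also have "\<dots> \<in> W q"
    by (intro subspace_sum[OF sW] subspace_scale[OF sW] phat_axis(2)[OF q])
  finally show "\<alpha> - sigma_coeff q \<alpha> *\<^sub>R s1 q \<in> W q" .
qed

lemma sigma_coeff_scaled_s1:
  assumes q: "q \<in> \<Omega>"
  shows "sigma_coeff q (c *\<^sub>R s1 q) = c"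
proof -
  have "phat g ix W q (c *\<^sub>R s1 q) = c *\<^sub>R s1 q"
    using W_subspace q subspace_0 by (intro phat_unique[OF q]) (auto simp: What_eq)
  then show ?thesis using phat_eq_sigma_coeff[OF q] scale_s1_cancel[OF q] by metis
qed

lemma sum_Phat_g: "q \<in> \<Omega> \<Longrightarrow> (\<Sum>j\<in>UNIV. Phat g ix W j q * g q $ j $ ix) = 1"
  using sigma_coeff_scaled_s1[of q 1] by (simp add: sigma_coeff_def s1_nth mult.commute)

lemma sigma_coeff_line: "sigma_coeff q (\<alpha> + t *\<^sub>R axis i 1) = sigma_coeff q \<alpha> + t * Phat g ix W i q"
proof -
  have "(\<alpha> + t *\<^sub>R axis i 1) $ k * Phat g ix W k q
      = \<alpha> $ k * Phat g ix W k q + (if k = i then t * Phat g ix W i q else 0)" for k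
    by (simp add: axis_def algebra_simps)
  then show ?thesis by (simp add: sigma_coeff_def sum.distrib)
qed

lemma KP_eq:
  assumes q: "q \<in> \<Omega>"
  shows "KP g ix W K q \<alpha> = 1/2 * K q * (sigma_coeff q \<alpha>)^2"
proof -
  have "(THE a. c *\<^sub>R s1 q = a *\<^sub>R s1 q) = c" for c
    by (rule the_equality) (use scale_s1_cancel[OF q] in auto)
  then show ?thesis by (simp add: KP_def Kform_def phat_eq_sigma_coeff[OF q])
qed

lemma hamil_eq: "hamil g q \<alpha> = 1/2 * (\<alpha> \<bullet> (ginv q *v \<alpha>))"
  by (simp add: hamil_def FH_def)

lemma FH_scaled_s1: "q \<in> \<Omega> \<Longrightarrow> FH g q (c *\<^sub>R s1 q) = c *\<^sub>R axis ix 1"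
  by (simp add: FH_def ginv_s1)

definition frame_matrix :: "('n \<Rightarrow> real^'n \<Rightarrow> real^'n) \<Rightarrow> real^'n \<Rightarrow> real^'n^'n" where
  "frame_matrix F p = (\<chi> i j. if j = ix then g p $ i $ ix else F j p $ i)"

lemma column_frame_matrix: "column j (frame_matrix F p) = (if j = ix then s1 p else F j p)"
  by (auto simp: column_def frame_matrix_def vec_eq_iff s1_nth)

lemma span_columns_frame_matrix:
  assumes p: "p \<in> \<Omega>" and WF: "W p = span ((\<lambda>a. F a p) ` (UNIV - {ix}))"
  shows "span (columns (frame_matrix F p)) = UNIV"
proof (rule set_eqI, rule iffI)
  let ?M = "frame_matrix F p"
  fix b :: "real^'n"
  obtain a \<beta> where ab: "b = a + \<beta>" "a \<in> W p" "\<beta> \<in> What g ix p" using W_compl p by blast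
  have "(\<lambda>a. F a p) ` (UNIV - {ix}) \<subseteq> columns ?M"
  proof (rule image_subsetI)
    fix a assume "a \<in> UNIV - {ix}"
    then have "F a p = column a ?M" using column_frame_matrix[of a] by simp
    then show "F a p \<in> columns ?M" unfolding columns_def by blast
  qed
  then have aS: "a \<in> span (columns ?M)" using ab(2) WF span_mono by blast
  obtain c where bc: "\<beta> = c *\<^sub>R s1 p" using ab(3) unfolding What_eq by blast
  have "s1 p = column ix ?M" using column_frame_matrix[of ix] by simp
  then have "s1 p \<in> columns ?M" unfolding columns_def by blast
  then show "b \<in> span (columns ?M)"
    unfolding ab(1) bc by (intro span_add[OF aS] span_scale span_base)
qed simp

text \<open>\<open>Phat k p\<close> is the \<open>s1 p\<close>-coordinate of \<open>axis k 1\<close> in the basis formed by \<open>s1 p\<close> and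
  a local frame \<open>F a p\<close> of \<open>W p\<close>, so Cramer's rule writes it as a quotient of determinants.\<close>
lemma Phat_Cramer:
  assumes p: "p \<in> \<Omega>" and WF: "W p = span ((\<lambda>a. F a p) ` (UNIV - {ix}))"
  shows "det (frame_matrix F p) \<noteq> 0"
    and "Phat g ix W k p = det (\<chi> i j. if j = ix then axis k 1 $ i else frame_matrix F p $ i $ j)
                            / det (frame_matrix F p)"
proof -
  let ?M = "frame_matrix F p"
  have "span (columns ?M) = UNIV" using span_columns_frame_matrix[of p F] p WF by simp
  then obtain B' where B': "?M ** B' = mat 1"
    using matrix_right_invertible_span_columns[of ?M] by (auto simp: span_vec_eq)
  then have "invertible ?M" unfolding invertible_def using matrix_left_right_inverse by blast
  then show dz: "det ?M \<noteq> 0" using invertible_det_nz by blast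
  define x where "x = B' *v axis k 1"
  have Mx: "?M *v x = axis k 1" by (simp add: x_def matrix_vector_mul_assoc B')
  have "?M *v x = (\<Sum>j\<in>UNIV. x $ j *\<^sub>R column j ?M)"
    by (simp add: matrix_mult_sum scalar_mult_eq_scaleR)
  also have "\<dots> = x $ ix *\<^sub>R s1 p + (\<Sum>j\<in>UNIV - {ix}. x $ j *\<^sub>R F j p)"
    by (simp add: sum.remove[of UNIV ix] column_frame_matrix)
  finally have "axis k 1 - x $ ix *\<^sub>R s1 p = (\<Sum>j\<in>UNIV - {ix}. x $ j *\<^sub>R F j p)"
    using Mx by simp
  also have "\<dots> \<in> W p"
    unfolding WF by (intro span_sum span_scale span_base) blast
  finally have "phat g ix W p (axis k 1) = x $ ix *\<^sub>R s1 p"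
    by (intro phat_unique[OF p]) (auto simp: What_eq)
  then have "Phat g ix W k p *\<^sub>R s1 p = x $ ix *\<^sub>R s1 p" by (simp only: phat_axis(1)[OF p])
  then have "Phat g ix W k p = x $ ix" using scale_s1_cancel[OF p] by blast
  also have "x $ ix = det (\<chi> i j. if j = ix then axis k 1 $ i else ?M $ i $ j) / det ?M"
    using cramer[of ?M x "axis k 1"] dz Mx by simp
  finally show "Phat g ix W k p = det (\<chi> i j. if j = ix then axis k 1 $ i else ?M $ i $ j) / det ?M" .
qed

lemma Phat_C1: "C1_on \<Omega> (Phat g ix W k)"
proof (rule C1_on_local[OF open_\<Omega>])
  fix p assume "p \<in> \<Omega>"
  obtain V F where V: "open V" "p \<in> V" and WF: "\<forall>p\<in>V \<inter> \<Omega>. W p = span ((\<lambda>a. F a p) ` (UNIV - {ix}))"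
    and Fs: "\<forall>a k. smooth_on V (\<lambda>p. (F a p :: real^'n) $ k)"
    using W_smooth \<open>p \<in> \<Omega>\<close> by metis
  let ?N = "\<lambda>p. det (\<chi> i j. if j = ix then axis k 1 $ i else frame_matrix F p $ i $ j)"
  let ?D = "\<lambda>p. det (frame_matrix F p)"
  have cM: "C1_on (V \<inter> \<Omega>) (\<lambda>p. frame_matrix F p $ i $ j)" for i j
    using C1_on_subset[OF g_C1, of "V \<inter> \<Omega>"]
      C1_on_subset[OF smooth_on_imp_C1_on[OF Fs[rule_format]], of "V \<inter> \<Omega>"]
    by (cases "j = ix") (simp_all add: frame_matrix_def)
  have "C1_on (V \<inter> \<Omega>) (\<lambda>p. ?N p / ?D p)"
  proof (rule C1_on_divide)
    show "C1_on (V \<inter> \<Omega>) ?N"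
      by (rule C1_on_det, case_tac "j = ix") (simp_all add: cM C1_on_const)
    show "C1_on (V \<inter> \<Omega>) ?D" by (rule C1_on_det[OF cM])
    show "\<forall>p\<in>V \<inter> \<Omega>. ?D p \<noteq> 0"
      using WF Phat_Cramer(1)[of _ F] by simp
  qed
  moreover have "\<forall>x\<in>V \<inter> \<Omega>. Phat g ix W k x = ?N x / ?D x"
    using WF Phat_Cramer(2)[of _ F k] by simp
  ultimately show "\<exists>V f0. open V \<and> p \<in> V \<and> C1_on (V \<inter> \<Omega>) f0 \<and> (\<forall>x\<in>V \<inter> \<Omega>. Phat g ix W k x = f0 x)"
    using V by (intro exI[of _ V] exI[of _ "\<lambda>p. ?N p / ?D p"]) simp
qed

lemma ginv_vector_C1: "C1_on \<Omega> (\<lambda>p. (ginv p *v \<sigma>) $ k)"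
proof -
  let ?N = "\<lambda>p. det (\<chi> i j. if j = k then \<sigma> $ i else g p $ i $ j)"
  have "(ginv p *v \<sigma>) $ k = ?N p / det (g p)" if p: "p \<in> \<Omega>" for p
  proof -
    have "g p *v (ginv p *v \<sigma>) = \<sigma>" using g_ginv[OF p] by (simp add: matrix_vector_mul_assoc)
    then show ?thesis using cramer[of "g p"] det_g_nonzero[OF p] by simp
  qed
  moreover have "C1_on \<Omega> (\<lambda>p. ?N p / det (g p))"
  proof (rule C1_on_divide)
    show "C1_on \<Omega> ?N" by (rule C1_on_det, case_tac "j = k") (simp_all add: C1_on_const g_C1)
    show "C1_on \<Omega> (\<lambda>p. det (g p))" by (rule C1_on_det) (rule g_C1)
    show "\<forall>p\<in>\<Omega>. det (g p) \<noteq> 0" using det_g_nonzero by blast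
  qed
  ultimately show ?thesis by (rule C1_on_cong_open[OF open_\<Omega>])
qed

lemma DERIV_coord_primitive_ix:
  assumes F: "continuous_on \<Omega> F" and q: "q \<in> \<Omega>"
  shows "((\<lambda>t. coord_primitive ix F (q + t *\<^sub>R axis ix 1)) has_real_derivative F q) (at 0)"
proof -
  have "continuous_on {lo $ ix<..<hi $ ix} (\<lambda>\<tau>. F (upd ix q \<tau>))"
    by (rule continuous_on_compose2[OF F continuous_on_upd]) (use upd_in_\<Omega>[OF q] in blast)
  then have "((\<lambda>t. oint 0 t (\<lambda>\<tau>. F (upd ix q \<tau>))) has_real_derivative F q) (at (q $ ix))"
    using oint_DERIV[of "lo $ ix" "hi $ ix"] box0 coord_ix_in[OF q] by fastforce
  then show ?thesis
    using DERIV_shift[of "\<lambda>t. oint 0 t (\<lambda>\<tau>. F (upd ix q \<tau>))" _ 0 "q $ ix"]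
    by (simp add: coord_primitive_line add.commute)
qed

lemma DERIV_coord_primitive_transverse:
  assumes F: "C1_on \<Omega> F" and a: "a \<noteq> ix" and q: "q \<in> \<Omega>"
  shows "((\<lambda>s. coord_primitive ix F (q + s *\<^sub>R axis a 1)) has_real_derivative
           coord_primitive ix (partial F a) q) (at 0)"
proof -
  define U where "U = {lo $ a - q $ a<..<hi $ a - q $ a}"
  have seg: "upd ix q \<tau> + s *\<^sub>R axis a 1 \<in> \<Omega>" if "s \<in> U" "\<tau> \<in> closed_segment 0 (q $ ix)" for s \<tau>
    using upd_in_\<Omega>[of "q + s *\<^sub>R axis a 1" \<tau>] line_in_\<Omega>_iff[OF q] segment_in_coord_range[OF q] that a
    by (auto simp: U_def upd_transverse)
  have "((\<lambda>s. oint 0 (q $ ix) (\<lambda>\<tau>. F (upd ix q \<tau> + s *\<^sub>R axis a 1))) has_real_derivative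
          oint 0 (q $ ix) (\<lambda>\<tau>. partial F a (upd ix q \<tau> + 0 *\<^sub>R axis a 1))) (at 0)"
  proof (rule oint_param_DERIV[where U = U])
    show "open U" "0 \<in> U" "convex U" using q by (auto simp: U_def \<Omega>_def mem_box_cart)
    show "((\<lambda>s. F (upd ix q \<tau> + s *\<^sub>R axis a 1)) has_real_derivative
            partial F a (upd ix q \<tau> + s *\<^sub>R axis a 1)) (at s)"
      if "s \<in> U" "\<tau> \<in> closed_segment 0 (q $ ix)" for s \<tau>
      by (rule C1_on_DERIV_at[OF F seg[OF that]])
    show "continuous_on (closed_segment 0 (q $ ix)) (\<lambda>\<tau>. F (upd ix q \<tau> + s *\<^sub>R axis a 1))"
      if "s \<in> U" for s
      by (rule continuous_on_compose2[OF C1_on_continuous[OF F]])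
         (use seg that in \<open>auto intro!: continuous_intros continuous_on_upd\<close>)
    have "continuous_on (U \<times> closed_segment 0 (q $ ix))
            (\<lambda>x. partial F a (upd ix q (snd x) + fst x *\<^sub>R axis a 1))"
      by (rule continuous_on_compose2[OF C1_on_partial_continuous[OF F]])
         (use seg in \<open>auto intro!: continuous_intros continuous_on_compose2[OF continuous_on_upd]\<close>)
    then show "continuous_on (U \<times> closed_segment 0 (q $ ix))
            (\<lambda>(s, \<tau>). partial F a (upd ix q \<tau> + s *\<^sub>R axis a 1))"
      by (simp add: split_beta)
  qed
  moreover have "axis a (1::real) $ ix = 0" using a by (simp add: axis_def)
  ultimately show ?thesis
    using a by (simp add: coord_primitive_def upd_transverse)
qed

subsection \<open>The kinetic equation\<close>

lemma partial_hamil_fiber: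
  assumes q: "q \<in> \<Omega>"
  shows "partial (hamil g q) i (c *\<^sub>R s1 q) = (if i = ix then c else 0)"
proof -
  define \<sigma> where "\<sigma> = c *\<^sub>R s1 q"
  define k0 where "k0 = (if i = ix then c else (0::real))"
  define d where "d = axis i 1 \<bullet> (ginv q *v axis i 1)"
  have Bs: "ginv q *v \<sigma> = c *\<^sub>R axis ix 1" using ginv_s1[OF q] by (simp add: \<sigma>_def)
  have e1: "\<sigma> \<bullet> (ginv q *v axis i 1) = k0"
  proof -
    have "\<sigma> \<bullet> (ginv q *v axis i 1) = (ginv q *v \<sigma>) \<bullet> axis i 1"
      using ginv_symmetric[OF q] inner_matrix_vector_transpose[of \<sigma> "ginv q" "axis i 1"] by simp
    also have "\<dots> = k0" unfolding Bs inner_axis by (simp add: k0_def axis_def)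
    finally show ?thesis .
  qed
  have e2: "axis i 1 \<bullet> (ginv q *v \<sigma>) = k0"
    unfolding Bs inner_axis' by (simp add: k0_def axis_def)
  have eq: "hamil g q (\<sigma> + t *\<^sub>R axis i 1) = 1/2 * (\<sigma> \<bullet> (ginv q *v \<sigma>)) + t * k0 + t^2 * (1/2 * d)" for t
  proof -
    have "(\<sigma> + t *\<^sub>R axis i 1) \<bullet> (ginv q *v (\<sigma> + t *\<^sub>R axis i 1))
        = \<sigma> \<bullet> (ginv q *v \<sigma>) + t * (\<sigma> \<bullet> (ginv q *v axis i 1)) + t * (axis i 1 \<bullet> (ginv q *v \<sigma>)) + t^2 * d"
      by (simp add: matrix_vector_right_distrib matrix_vector_mult_scaleR inner_add_left
          inner_add_right d_def
          power2_eq_square algebra_simps)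
    then show ?thesis by (simp add: hamil_eq e1 e2 algebra_simps)
  qed
  have "((\<lambda>t. 1/2 * (\<sigma> \<bullet> (ginv q *v \<sigma>)) + t * k0 + t^2 * (1/2 * d)) has_real_derivative k0) (at 0)"
    by (auto intro!: derivative_eq_intros)
  then have "((\<lambda>t. hamil g q (\<sigma> + t *\<^sub>R axis i 1)) has_real_derivative k0) (at 0)"
    by (simp add: eq)
  then show ?thesis unfolding \<sigma>_def k0_def by (rule partial_eqI)
qed

lemma partial_KP_fiber:
  assumes q: "q \<in> \<Omega>"
  shows "partial (KP g ix W K q) i (c *\<^sub>R s1 q) = K q * c * Phat g ix W i q"
proof -
  have eq: "KP g ix W K q (c *\<^sub>R s1 q + t *\<^sub>R axis i 1) = 1/2 * K q * (c + t * Phat g ix W i q)^2" for t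
    by (simp add: KP_eq[OF q] sigma_coeff_line sigma_coeff_scaled_s1[OF q])
  have "((\<lambda>t. 1/2 * K q * (c + t * Phat g ix W i q)^2) has_real_derivative
          K q * c * Phat g ix W i q) (at 0)"
    by (auto intro!: derivative_eq_intros)
  then show ?thesis by (intro partial_eqI) (simp add: eq)
qed

text \<open>Differentiating the identity \<open>g (g\<^sup>-\<^sup>1 \<sigma>) = \<sigma>\<close> in the base point.\<close>
lemma partial_g_ginv_vector:
  assumes q: "q \<in> \<Omega>"
  shows "(\<Sum>k\<in>UNIV. partial (\<lambda>p. g p $ j $ k) i q * (ginv q *v \<sigma>) $ k
                  + g q $ j $ k * partial (\<lambda>p. (ginv p *v \<sigma>) $ k) i q) = 0"
proof -
  define F where "F p = (\<Sum>k\<in>UNIV. g p $ j $ k * (ginv p *v \<sigma>) $ k)" for p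
  have "((\<lambda>t. F (q + t *\<^sub>R axis i 1)) has_real_derivative
      (\<Sum>k\<in>UNIV. partial (\<lambda>p. g p $ j $ k) i q * (ginv q *v \<sigma>) $ k
                  + g q $ j $ k * partial (\<lambda>p. (ginv p *v \<sigma>) $ k) i q)) (at 0)"
    unfolding F_def
    using DERIV_mult[OF C1_on_DERIV[OF g_C1 q] C1_on_DERIV[OF ginv_vector_C1 q]]
    by (intro DERIV_sum) (simp add: mult.commute)
  then have "partial F i q = (\<Sum>k\<in>UNIV. partial (\<lambda>p. g p $ j $ k) i q * (ginv q *v \<sigma>) $ k
                  + g q $ j $ k * partial (\<lambda>p. (ginv p *v \<sigma>) $ k) i q)"
    by (rule partial_eqI)
  moreover have "F p = \<sigma> $ j" if p: "p \<in> \<Omega>" for p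
  proof -
    have "g p *v (ginv p *v \<sigma>) = \<sigma>" using g_ginv[OF p] by (simp add: matrix_vector_mul_assoc)
    then show ?thesis unfolding F_def by (metis matrix_vector_mult_nth)
  qed
  then have "partial F i q = partial (\<lambda>p. \<sigma> $ j) i q"
    by (rule partial_cong_open[OF open_\<Omega> q])
  ultimately show ?thesis by simp
qed

lemma partial_hamil_base:
  assumes q: "q \<in> \<Omega>"
  shows "partial (\<lambda>q'. hamil g q' (c *\<^sub>R s1 q)) i q = - 1/2 * c^2 * partial (\<lambda>p. g p $ ix $ ix) i q"
proof -
  define \<sigma> where "\<sigma> = c *\<^sub>R s1 q"
  define w where "w k p = (ginv p *v \<sigma>) $ k" for k p
  define w' where "w' k = partial (w k) i q" for k
  define gd where "gd j k = partial (\<lambda>p. g p $ j $ k) i q" for j k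
  have wq: "w k q = c * axis ix 1 $ k" for k
    using ginv_s1[OF q] by (simp add: w_def \<sigma>_def)
  have "(\<Sum>k\<in>UNIV. g q $ ix $ k * w' k) = - (\<Sum>k\<in>UNIV. gd ix k * w k q)"
    using partial_g_ginv_vector[OF q, of ix i \<sigma>]
    unfolding sum.distrib w_def w'_def gd_def by linarith
  also have "(\<Sum>k\<in>UNIV. gd ix k * w k q) = gd ix ix * c"
    by (simp add: wq axis_def if_distrib sum.delta cong: if_cong)
  finally have key: "(\<Sum>k\<in>UNIV. g q $ ix $ k * w' k) = - (gd ix ix * c)" .
  have "(\<Sum>k\<in>UNIV. \<sigma> $ k * w' k) = c * (\<Sum>k\<in>UNIV. g q $ ix $ k * w' k)"
    by (simp add: \<sigma>_def s1_nth g_sym_nth[OF q, of _ ix] sum_distrib_left mult.assoc)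
  then have sig: "(\<Sum>k\<in>UNIV. \<sigma> $ k * w' k) = - (c * c) * gd ix ix"
    using key by simp
  have hp: "hamil g p \<sigma> = 1/2 * (\<Sum>k\<in>UNIV. \<sigma> $ k * w k p)" for p
    by (simp add: hamil_eq w_def inner_vec_def)
  have "((\<lambda>t. 1/2 * (\<Sum>k\<in>UNIV. \<sigma> $ k * w k (q + t *\<^sub>R axis i 1))) has_real_derivative
           1/2 * (\<Sum>k\<in>UNIV. \<sigma> $ k * w' k)) (at 0)"
    unfolding w'_def w_def by (intro DERIV_cmult DERIV_sum C1_on_DERIV[OF ginv_vector_C1 q])
  then have "((\<lambda>t. hamil g (q + t *\<^sub>R axis i 1) \<sigma>) has_real_derivative
           1/2 * (\<Sum>k\<in>UNIV. \<sigma> $ k * w' k)) (at 0)"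
    unfolding hp .
  then have "partial (\<lambda>q'. hamil g q' \<sigma>) i q = 1/2 * (- (c * c) * gd ix ix)"
    unfolding sig by (rule partial_eqI)
  then show ?thesis by (simp add: \<sigma>_def gd_def power2_eq_square)
qed

lemma partial_KP_base:
  assumes q: "q \<in> \<Omega>" and K: "C1_on \<Omega> K"
  shows "partial (\<lambda>q'. KP g ix W K q' (c *\<^sub>R s1 q)) ix q
     = 1/2 * partial K ix q * c^2 + K q * c * (\<Sum>k\<in>UNIV. (c *\<^sub>R s1 q) $ k * partial (Phat g ix W k) ix q)"
proof -
  define \<sigma> where "\<sigma> = c *\<^sub>R s1 q"
  define S where "S p = (\<Sum>k\<in>UNIV. \<sigma> $ k * Phat g ix W k p)" for p
  define S' where "S' = (\<Sum>k\<in>UNIV. \<sigma> $ k * partial (Phat g ix W k) ix q)"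
  have Sq: "S q = c" using sigma_coeff_scaled_s1[OF q] by (simp add: S_def sigma_coeff_def \<sigma>_def)
  have dS: "((\<lambda>t. S (q + t *\<^sub>R axis ix 1)) has_real_derivative S') (at 0)"
    unfolding S_def S'_def by (intro DERIV_sum DERIV_cmult C1_on_DERIV[OF Phat_C1 q])
  have dK: "((\<lambda>t. K (q + t *\<^sub>R axis ix 1)) has_real_derivative partial K ix q) (at 0)"
    by (rule C1_on_DERIV[OF K q])
  have "((\<lambda>t. 1/2 * K (q + t *\<^sub>R axis ix 1) * (S (q + t *\<^sub>R axis ix 1))^2) has_real_derivative
          1/2 * partial K ix q * (S q)^2 + 1/2 * K q * (2 * S q * S')) (at 0)"
    using DERIV_mult[OF DERIV_cmult[OF dK, of "1/2"] DERIV_power[OF dS, of 2]]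
    by (simp add: algebra_simps)
  then have D: "((\<lambda>t. 1/2 * K (q + t *\<^sub>R axis ix 1) * (S (q + t *\<^sub>R axis ix 1))^2) has_real_derivative
          1/2 * partial K ix q * c^2 + K q * c * S') (at 0)"
    by (simp add: Sq algebra_simps)
  have "((\<lambda>t. KP g ix W K (q + t *\<^sub>R axis ix 1) \<sigma>) has_real_derivative
          1/2 * partial K ix q * c^2 + K q * c * S') (at 0)"
  proof (rule DERIV_line_cong_open[OF open_\<Omega> q _ D])
    fix y assume "y \<in> \<Omega>"
    then show "KP g ix W K y \<sigma> = 1/2 * K y * (S y)^2" by (simp add: KP_eq S_def sigma_coeff_def)
  qed
  then show ?thesis unfolding \<sigma>_def S'_def by (intro partial_eqI)
qed

lemma partial_Phat_product:
  assumes q: "q \<in> \<Omega>"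
  shows "partial (\<lambda>q'. Phat g ix W i q' * Phat g ix W j q') ix q
     = partial (Phat g ix W i) ix q * Phat g ix W j q + Phat g ix W i q * partial (Phat g ix W j) ix q"
  using DERIV_mult[OF C1_on_DERIV[OF Phat_C1 q, of i ix] C1_on_DERIV[OF Phat_C1 q, of j ix]]
  by (intro partial_eqI) (simp add: mult.commute)

text \<open>The double sum in \<open>Gfun\<close> collapses because \<open>phat\<close> fixes \<open>s1\<close> (\<open>sum_Phat_g\<close>).\<close>
lemma Gfun_eq:
  assumes q: "q \<in> \<Omega>"
  shows "Gfun g ix W q = (\<Sum>i\<in>UNIV. partial (\<lambda>p. g p $ ix $ ix) i q * Phat g ix W i q)
            + 2 * (\<Sum>i\<in>UNIV. partial (Phat g ix W i) ix q * g q $ i $ ix)"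
proof -
  define P where "P i = Phat g ix W i q" for i
  define P' where "P' i = partial (Phat g ix W i) ix q" for i
  define gd where "gd i = partial (\<lambda>p. g p $ ix $ ix) i q" for i
  define gg where "gg i = g q $ i $ ix" for i
  have Hc1: "(\<lambda>q'. Hc g q' ix ix) = (\<lambda>p. g p $ ix $ ix)" by (simp add: Hc_eq)
  have A: "(\<Sum>i\<in>UNIV. gd i * P i) = gd ix * P ix + (\<Sum>a\<in>UNIV - {ix}. gd a * P a)"
    by (rule sum.remove) auto
  have pp: "partial (\<lambda>q'. Phat g ix W i q' * Phat g ix W j q') ix q = P' i * P j + P i * P' j" for i j
    using partial_Phat_product[OF q] by (simp add: P_def P'_def)
  have "(\<Sum>i\<in>UNIV. \<Sum>j\<in>UNIV. (P' i * P j + P i * P' j) * gg i * gg j)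
      = (\<Sum>i\<in>UNIV. \<Sum>j\<in>UNIV. (P' i * gg i) * (P j * gg j))
        + (\<Sum>i\<in>UNIV. \<Sum>j\<in>UNIV. (P i * gg i) * (P' j * gg j))"
    by (simp add: sum.distrib algebra_simps)
  also have "\<dots> = (\<Sum>i\<in>UNIV. P' i * gg i) * (\<Sum>j\<in>UNIV. P j * gg j)
                  + (\<Sum>i\<in>UNIV. P i * gg i) * (\<Sum>j\<in>UNIV. P' j * gg j)"
    by (simp add: sum_product)
  also have "(\<Sum>j\<in>UNIV. P j * gg j) = 1" using sum_Phat_g[OF q] by (simp add: P_def gg_def)
  finally have B: "(\<Sum>i\<in>UNIV. \<Sum>j\<in>UNIV. (P' i * P j + P i * P' j) * gg i * gg j)
      = 2 * (\<Sum>i\<in>UNIV. P' i * gg i)"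
    by simp
  have "Gfun g ix W q = gd ix * P ix + (\<Sum>a\<in>UNIV - {ix}. gd a * P a)
       + (\<Sum>i\<in>UNIV. \<Sum>j\<in>UNIV. (P' i * P j + P i * P' j) * gg i * gg j)"
    unfolding Gfun_def Hc1 pp by (simp add: Hc_eq P_def gd_def gg_def)
  also have "\<dots> = (\<Sum>i\<in>UNIV. gd i * P i) + 2 * (\<Sum>i\<in>UNIV. P' i * gg i)" using A B by simp
  finally show ?thesis by (simp add: P_def P'_def gd_def gg_def)
qed

lemma poisson_KP_hamil:
  assumes q: "q \<in> \<Omega>" and K: "C1_on \<Omega> K"
  shows "poisson (KP g ix W K) (hamil g) q (c *\<^sub>R s1 q) = c^3 / 2 * (partial K ix q + K q * Gfun g ix W q)"
proof -
  define \<sigma> where "\<sigma> = c *\<^sub>R s1 q"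
  define X where "X i = partial (\<lambda>q'. KP g ix W K q' \<sigma>) i q" for i
  define P where "P i = Phat g ix W i q" for i
  define P' where "P' i = partial (Phat g ix W i) ix q" for i
  define gd where "gd i = partial (\<lambda>p. g p $ ix $ ix) i q" for i
  define gg where "gg i = g q $ i $ ix" for i
  have "poisson (KP g ix W K) (hamil g) q \<sigma>
      = (\<Sum>i\<in>UNIV. X i * (if i = ix then c else 0) - K q * c * P i * (- 1/2 * c^2 * gd i))"
    unfolding poisson_def X_def \<sigma>_def
    by (simp add: partial_hamil_fiber[OF q] partial_KP_fiber[OF q] partial_hamil_base[OF q] P_def gd_def)
  also have "\<dots> = (\<Sum>i\<in>UNIV. (if i = ix then X i * c else 0)) + (\<Sum>i\<in>UNIV. 1/2 * c^3 * K q * (P i * gd i))"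
  proof -
    have "X i * (if i = ix then c else 0) - K q * c * P i * (- 1/2 * c^2 * gd i)
        = (if i = ix then X i * c else 0) + 1/2 * c^3 * K q * (P i * gd i)" for i
      by (cases "i = ix") (simp_all add: power3_eq_cube power2_eq_square algebra_simps)
    then show ?thesis by (simp add: sum.distrib)
  qed
  also have "\<dots> = X ix * c + 1/2 * c^3 * K q * (\<Sum>i\<in>UNIV. P i * gd i)"
    by (simp add: sum_distrib_left)
  also have "X ix = 1/2 * partial K ix q * c^2 + K q * c * (c * (\<Sum>k\<in>UNIV. gg k * P' k))"
  proof -
    have "X ix = 1/2 * partial K ix q * c^2 + K q * c * (\<Sum>k\<in>UNIV. (c *\<^sub>R s1 q) $ k * P' k)"
      unfolding X_def \<sigma>_def P'_def by (rule partial_KP_base[OF q K])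
    also have "(\<Sum>k\<in>UNIV. (c *\<^sub>R s1 q) $ k * P' k) = c * (\<Sum>k\<in>UNIV. gg k * P' k)"
      by (simp add: s1_nth gg_def sum_distrib_left mult.assoc)
    finally show ?thesis .
  qed
  also have "Gfun g ix W q = (\<Sum>i\<in>UNIV. gd i * P i) + 2 * (\<Sum>i\<in>UNIV. P' i * gg i)"
    using Gfun_eq[OF q] by (simp add: gd_def P_def P'_def gg_def)
  moreover have sA: "(\<Sum>i\<in>UNIV. gd i * P i) = (\<Sum>i\<in>UNIV. P i * gd i)" by (simp add: mult.commute)
  moreover have sB: "(\<Sum>i\<in>UNIV. P' i * gg i) = (\<Sum>i\<in>UNIV. gg i * P' i)" by (simp add: mult.commute)
  moreover have alg: "(1/2*kx*c^2 + k*c*(c*b))*c + 1/2*c^3*k*a = c^3/2*(kx + k*(a + 2*b))"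
    for kx k a b :: real
    by (simp add: power3_eq_cube power2_eq_square algebra_simps)
  ultimately show ?thesis unfolding \<sigma>_def[symmetric] by (simp only: alg)
qed

lemma kinetic_eq_iff_transport:
  assumes K: "C1_on \<Omega> K"
  shows "kinetic_eq \<Omega> g ix W K \<longleftrightarrow> (\<forall>q\<in>\<Omega>. partial K ix q + K q * Gfun g ix W q = 0)"
proof
  assume ke: "kinetic_eq \<Omega> g ix W K"
  show "\<forall>q\<in>\<Omega>. partial K ix q + K q * Gfun g ix W q = 0"
  proof
    fix q assume q: "q \<in> \<Omega>"
    have "s1 q \<in> What g ix q" unfolding What_eq using rangeI[of "\<lambda>c. c *\<^sub>R s1 q" 1] by simp
    then have "poisson (KP g ix W K) (hamil g) q (1 *\<^sub>R s1 q) = 0"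
      using ke q unfolding kinetic_eq_def by simp
    then show "partial K ix q + K q * Gfun g ix W q = 0" using poisson_KP_hamil[OF q K, of 1] by simp
  qed
next
  assume E: "\<forall>q\<in>\<Omega>. partial K ix q + K q * Gfun g ix W q = 0"
  show "kinetic_eq \<Omega> g ix W K" unfolding kinetic_eq_def
  proof (intro ballI)
    fix q \<sigma> assume q: "q \<in> \<Omega>" and s: "\<sigma> \<in> What g ix q"
    then obtain c where "\<sigma> = c *\<^sub>R s1 q" unfolding What_eq by blast
    then show "poisson (KP g ix W K) (hamil g) q \<sigma> = 0" using poisson_KP_hamil[OF q K, of c] E q by simp
  qed
qed

lemma continuous_on_Gfun: "continuous_on \<Omega> (Gfun g ix W)"
proof -
  let ?G = "\<lambda>q. (\<Sum>i\<in>UNIV. partial (\<lambda>p. g p $ ix $ ix) i q * Phat g ix W i q)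
            + 2 * (\<Sum>i\<in>UNIV. partial (Phat g ix W i) ix q * g q $ i $ ix)"
  have "continuous_on \<Omega> ?G"
    by (intro continuous_intros C1_on_partial_continuous[OF g_C1] C1_on_continuous[OF Phat_C1]
        C1_on_partial_continuous[OF Phat_C1] C1_on_continuous[OF g_C1])
  moreover have "continuous_on \<Omega> (Gfun g ix W) = continuous_on \<Omega> ?G"
    by (rule continuous_on_cong) (simp_all add: Gfun_eq)
  ultimately show ?thesis by simp
qed

lemma DERIV_K_exp_coord_primitive:
  assumes K: "C1_on \<Omega> K" and q: "q \<in> \<Omega>"
  shows "((\<lambda>t. K (q + t *\<^sub>R axis ix 1) * exp (coord_primitive ix (Gfun g ix W) (q + t *\<^sub>R axis ix 1)))
           has_real_derivative
           exp (coord_primitive ix (Gfun g ix W) q) * (partial K ix q + K q * Gfun g ix W q)) (at 0)"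
  using DERIV_mult[OF C1_on_DERIV[OF K q]
      DERIV_chain2[OF DERIV_exp DERIV_coord_primitive_ix[OF continuous_on_Gfun q]]]
  by (simp add: algebra_simps)

lemma transport_iff_line_invariant:
  assumes K: "C1_on \<Omega> K"
  shows "(\<forall>q\<in>\<Omega>. partial K ix q + K q * Gfun g ix W q = 0) \<longleftrightarrow>
         (\<forall>q\<in>\<Omega>. K q * exp (coord_primitive ix (Gfun g ix W) q) = K (upd ix q 0))"
    (is "?T \<longleftrightarrow> (\<forall>q\<in>\<Omega>. ?\<psi> q = _)")
proof
  assume T: ?T
  show "\<forall>q\<in>\<Omega>. ?\<psi> q = K (upd ix q 0)"
  proof
    fix q assume q: "q \<in> \<Omega>"
    have D: "((\<lambda>\<tau>. ?\<psi> (upd ix q \<tau>)) has_real_derivative 0) (at t within {lo $ ix<..<hi $ ix})"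
      if "t \<in> {lo $ ix<..<hi $ ix}" for t
    proof -
      from DERIV_K_exp_coord_primitive[OF K upd_in_\<Omega>[OF q that],
          unfolded T[rule_format, OF upd_in_\<Omega>[OF q that]] mult_zero_right]
      show ?thesis by (rule has_field_derivative_at_within[OF DERIV_upd_of_DERIV_line])
    qed
    obtain c where c: "\<forall>t\<in>{lo $ ix<..<hi $ ix}. ?\<psi> (upd ix q t) = c"
      using has_field_derivative_zero_constant[OF convex_real_interval(8) D] by blast
    have "0 \<in> {lo $ ix<..<hi $ ix}" using box0 by auto
    then have "?\<psi> (upd ix q (q $ ix)) = ?\<psi> (upd ix q 0)"
      using c[rule_format, OF coord_ix_in[OF q]] c[rule_format] by (simp only:)
    then show "?\<psi> q = K (upd ix q 0)"
      by (simp add: coord_primitive_hyperplane)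
  qed
next
  assume I: "\<forall>q\<in>\<Omega>. ?\<psi> q = K (upd ix q 0)"
  show ?T
  proof
    fix q assume q: "q \<in> \<Omega>"
    have "eventually (\<lambda>t. ?\<psi> (q + t *\<^sub>R axis ix 1) = K (upd ix q 0)) (nhds 0)"
      using eventually_line_in_open[OF open_\<Omega> q, of "axis ix 1"]
      by eventually_elim (use I in \<open>simp add: upd_line\<close>)
    then have "((\<lambda>t. ?\<psi> (q + t *\<^sub>R axis ix 1)) has_real_derivative 0) (at 0)"
      by (subst DERIV_cong_ev[OF refl _ refl]) auto
    then have "exp (coord_primitive ix (Gfun g ix W) q) * (partial K ix q + K q * Gfun g ix W q) = 0"
      using DERIV_unique[OF DERIV_K_exp_coord_primitive[OF K q]] by blast
    then show "partial K ix q + K q * Gfun g ix W q = 0" by simp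
  qed
qed

lemma kinetic_eq_iff_exp_formula:
  assumes Ks: "smooth_on \<Omega> K" and Kpos: "\<forall>q\<in>\<Omega>. K q > 0"
  shows "kinetic_eq \<Omega> g ix W K \<longleftrightarrow>
          (\<exists>\<xi>. smooth_on \<Omega> \<xi> \<and> (\<forall>q\<in>\<Omega>. \<xi> q > 0 \<and> \<xi> q = \<xi> (upd ix q 0)) \<and>
               (\<forall>q\<in>\<Omega>. K q = \<xi> q * exp (- coord_primitive ix (Gfun g ix W) q)))"
proof -
  have K: "C1_on \<Omega> K" by (rule smooth_on_imp_C1_on[OF Ks])
  let ?\<Gamma> = "coord_primitive ix (Gfun g ix W)"
  have invariant: "kinetic_eq \<Omega> g ix W K \<longleftrightarrow> (\<forall>q\<in>\<Omega>. K q * exp (?\<Gamma> q) = K (upd ix q 0))"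
    using kinetic_eq_iff_transport[OF K] transport_iff_line_invariant[OF K] by simp
  have exp_cancel: "a * exp (- x) * exp x = a" for a x :: real
    by (simp add: exp_minus field_simps)
  show ?thesis
  proof
    assume "kinetic_eq \<Omega> g ix W K"
    then have inv: "K q * exp (?\<Gamma> q) = K (upd ix q 0)" if "q \<in> \<Omega>" for q
      using invariant that by blast
    have "K q = K (upd ix q 0) * exp (- ?\<Gamma> q)" if "q \<in> \<Omega>" for q
      using exp_cancel[of "K q" "- ?\<Gamma> q"] inv[OF that] by (simp add: mult.commute)
    moreover have "smooth_on \<Omega> (\<lambda>q. K (upd ix q 0))"
      by (rule smooth_on_comp_upd_0[OF Ks upd_0_in_\<Omega>])
    moreover have "K (upd ix q 0) > 0" if "q \<in> \<Omega>" for q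
      using Kpos upd_0_in_\<Omega>[OF that] by blast
    ultimately show "\<exists>\<xi>. smooth_on \<Omega> \<xi> \<and> (\<forall>q\<in>\<Omega>. \<xi> q > 0 \<and> \<xi> q = \<xi> (upd ix q 0)) \<and>
               (\<forall>q\<in>\<Omega>. K q = \<xi> q * exp (- ?\<Gamma> q))"
      by (intro exI[of _ "\<lambda>q. K (upd ix q 0)"]) simp
  next
    assume "\<exists>\<xi>. smooth_on \<Omega> \<xi> \<and> (\<forall>q\<in>\<Omega>. \<xi> q > 0 \<and> \<xi> q = \<xi> (upd ix q 0)) \<and>
               (\<forall>q\<in>\<Omega>. K q = \<xi> q * exp (- ?\<Gamma> q))"
    then obtain \<xi> where \<xi>: "\<And>q. q \<in> \<Omega> \<Longrightarrow> \<xi> q = \<xi> (upd ix q 0)"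
        and K_eq: "\<And>q. q \<in> \<Omega> \<Longrightarrow> K q = \<xi> q * exp (- ?\<Gamma> q)"
      by blast
    have "K q * exp (?\<Gamma> q) = K (upd ix q 0)" if q: "q \<in> \<Omega>" for q
    proof -
      have "K (upd ix q 0) = \<xi> q"
        using K_eq[OF upd_0_in_\<Omega>[OF q]] \<xi>[OF q] by (simp add: coord_primitive_hyperplane)
      then show ?thesis using K_eq[OF q] exp_cancel by simp
    qed
    then show "kinetic_eq \<Omega> g ix W K" using invariant by blast
  qed
qed

subsection \<open>The potential equation\<close>

lemma ufun_eq: "ufun g ix W h K q = (\<Sum>i\<in>UNIV. partial h i q * Phat g ix W i q) * K q"
  by (simp add: ufun_def sum.remove[of UNIV ix])

lemma ufun_C1:
  assumes K: "C1_on \<Omega> K"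
  shows "C1_on \<Omega> (ufun g ix W h K)"
proof -
  have e: "ufun g ix W h K = (\<lambda>q. (\<Sum>i\<in>UNIV. partial h i q * Phat g ix W i q) * K q)"
    by (simp add: fun_eq_iff ufun_eq)
  show ?thesis unfolding e
    by (intro C1_on_mult C1_on_sum K smooth_on_imp_C1_on_partial[OF h_smooth] Phat_C1) auto
qed

lemma dcomp_FH: "q \<in> \<Omega> \<Longrightarrow> dcomp f (FH g) q (c *\<^sub>R s1 q) = c * partial f ix q"
  by (simp add: dcomp_def FH_scaled_s1 axis_def if_distrib sum.delta cong: if_cong)

lemma dcomp_KP: "q \<in> \<Omega> \<Longrightarrow> dcomp h (fib_deriv (KP g ix W K)) q (c *\<^sub>R s1 q) = c * ufun g ix W h K q"
proof -
  assume q: "q \<in> \<Omega>"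
  have "dcomp h (fib_deriv (KP g ix W K)) q (c *\<^sub>R s1 q)
      = (\<Sum>i\<in>UNIV. c * (partial h i q * Phat g ix W i q * K q))"
    unfolding dcomp_def fib_deriv_def by (rule sum.cong) (simp_all add: partial_KP_fiber[OF q])
  also have "\<dots> = c * ufun g ix W h K q"
    by (simp add: ufun_eq sum_distrib_left sum_distrib_right mult.assoc)
  finally show ?thesis .
qed

lemma potential_eq_iff:
  "potential_eq \<Omega> g ix W h K f \<longleftrightarrow> (\<forall>q\<in>\<Omega>. partial f ix q = ufun g ix W h K q)"
proof
  assume pe: "potential_eq \<Omega> g ix W h K f"
  show "\<forall>q\<in>\<Omega>. partial f ix q = ufun g ix W h K q"
  proof
    fix q assume q: "q \<in> \<Omega>"
    have "1 *\<^sub>R s1 q \<in> What g ix q" unfolding What_eq by (rule rangeI)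
    then have "dcomp f (FH g) q (1 *\<^sub>R s1 q) - dcomp h (fib_deriv (KP g ix W K)) q (1 *\<^sub>R s1 q) = 0"
      using pe q unfolding potential_eq_def by blast
    then show "partial f ix q = ufun g ix W h K q"
      using dcomp_FH[OF q, of f 1] dcomp_KP[OF q, of K 1] by simp
  qed
next
  assume E: "\<forall>q\<in>\<Omega>. partial f ix q = ufun g ix W h K q"
  show "potential_eq \<Omega> g ix W h K f" unfolding potential_eq_def
  proof (intro ballI)
    fix q \<sigma> assume q: "q \<in> \<Omega>" and s: "\<sigma> \<in> What g ix q"
    then obtain c where "\<sigma> = c *\<^sub>R s1 q" unfolding What_eq by blast
    then show "dcomp f (FH g) q \<sigma> - dcomp h (fib_deriv (KP g ix W K)) q \<sigma> = 0"
      using E q by (simp add: dcomp_FH[OF q] dcomp_KP[OF q])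
  qed
qed

lemma hhat_eq:
  "hhat g ix W h K vpi q = coord_primitive ix (ufun g ix W h K) q + vpi / 2 * (\<Sum>a\<in>UNIV - {ix}. (q $ a)^2)"
  by (simp add: hhat_def coord_primitive_def)

lemma DERIV_hhat_line:
  assumes "((\<lambda>t. coord_primitive ix (ufun g ix W h K) (q + t *\<^sub>R axis i 1)) has_real_derivative D) (at 0)"
  shows "((\<lambda>t. hhat g ix W h K vpi (q + t *\<^sub>R axis i 1)) has_real_derivative
           D + (if i = ix then 0 else vpi * q $ i)) (at 0)"
proof -
  have "vpi / 2 * (if i = ix then 0 else 2 * q $ i) = (if i = ix then 0 else vpi * q $ i)"
    by simp
  with DERIV_add[OF assms
         DERIV_cmult[OF DERIV_transverse_sum_power2[where ix=ix and q=q and i=i], of "vpi / 2"]]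
  show ?thesis unfolding hhat_eq by (simp only:)
qed

lemma partial_hhat_ix:
  assumes K: "C1_on \<Omega> K" and q: "q \<in> \<Omega>"
  shows "partial (hhat g ix W h K vpi) ix q = ufun g ix W h K q"
  using partial_eqI[OF DERIV_hhat_line[OF
        DERIV_coord_primitive_ix[OF C1_on_continuous[OF ufun_C1[OF K]] q]]]
  by simp

lemma partial_hhat_transverse:
  assumes K: "C1_on \<Omega> K" and a: "a \<noteq> ix" and q: "q \<in> \<Omega>"
  shows "partial (hhat g ix W h K vpi) a q
           = coord_primitive ix (partial (ufun g ix W h K) a) q + vpi * q $ a"
  using partial_eqI[OF DERIV_hhat_line[OF
        DERIV_coord_primitive_transverse[OF ufun_C1[OF K] a q]]] a
  by simp

lemma potential_eq_hhat:
  assumes "C1_on \<Omega> K"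
  shows "potential_eq \<Omega> g ix W h K (hhat g ix W h K vpi)"
  using partial_hhat_ix[OF assms] by (simp add: potential_eq_iff)

lemma ufun_zero_of_critical:
  "(h has_derivative (\<lambda>v. 0)) (at 0) \<Longrightarrow> ufun g ix W h K 0 = 0"
  by (simp add: ufun_eq partial_eq_0_of_critical)

lemma hhat_has_derivative_0:
  assumes K: "C1_on \<Omega> K" and crit: "(h has_derivative (\<lambda>v. 0)) (at 0)"
  shows "(hhat g ix W h K vpi has_derivative (\<lambda>v. 0)) (at 0)"
proof -
  have "(coord_primitive ix (ufun g ix W h K) has_derivative (\<lambda>v. 0)) (at 0)"
    by (rule coord_primitive_has_derivative_0[OF open_\<Omega> zero_in_\<Omega>
          C1_on_continuous[OF ufun_C1[OF K]] ufun_zero_of_critical[OF crit]])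
  moreover have "((\<lambda>q. vpi / 2 * (\<Sum>a\<in>UNIV - {ix}. (q $ a)^2)) has_derivative (\<lambda>v. 0)) (at 0)"
  proof -
    have "((\<lambda>q::real^'n. (q $ a)^2) has_derivative (\<lambda>v. of_nat 2 * v $ a * (0 $ a) ^ (2 - 1)))
            (at 0)" for a
      by (rule has_derivative_power[OF bounded_linear_imp_has_derivative[OF bounded_linear_vec_nth]])
    then have "((\<lambda>q::real^'n. \<Sum>a\<in>UNIV - {ix}. (q $ a)^2) has_derivative (\<lambda>v. \<Sum>a\<in>UNIV - {ix}. 0)) (at 0)"
      by (intro has_derivative_sum) simp
    then show ?thesis using has_derivative_mult_right[of _ "\<lambda>v. 0" _ "vpi / 2"] by simp
  qed
  ultimately show ?thesis
    unfolding hhat_eq[abs_def] using has_derivative_add[of _ "\<lambda>v. 0" _ _ "\<lambda>v. 0"] by simp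
qed

lemma hessian_hhat_col_ix:
  assumes K: "C1_on \<Omega> K"
  shows "hessian (hhat g ix W h K vpi) 0 $ i $ ix = partial (ufun g ix W h K) i 0"
  unfolding hessian_def
  by (simp, rule partial_cong_open[OF open_\<Omega> zero_in_\<Omega>]) (rule partial_hhat_ix[OF K])

lemma hessian_hhat_row_ix:
  assumes K: "C1_on \<Omega> K" and a: "a \<noteq> ix"
  shows "hessian (hhat g ix W h K vpi) 0 $ ix $ a = partial (ufun g ix W h K) a 0"
proof -
  let ?F = "\<lambda>q. coord_primitive ix (partial (ufun g ix W h K) a) q + vpi * q $ a"
  have "partial (partial (hhat g ix W h K vpi) a) ix 0 = partial ?F ix 0"
    by (rule partial_cong_open[OF open_\<Omega> zero_in_\<Omega>]) (rule partial_hhat_transverse[OF K a])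
  moreover have "((\<lambda>t. vpi * (0 + t *\<^sub>R axis ix 1) $ a) has_real_derivative 0) (at 0)"
    using a by (simp add: axis_def)
  ultimately show ?thesis
    unfolding hessian_def
    using partial_eqI[OF DERIV_add[OF DERIV_coord_primitive_ix[OF
          C1_on_partial_continuous[OF ufun_C1[OF K]] zero_in_\<Omega>]]] by simp
qed

lemma hessian_hhat_transverse:
  assumes K: "C1_on \<Omega> K" and a: "a \<noteq> ix" and b: "b \<noteq> ix"
  shows "hessian (hhat g ix W h K vpi) 0 $ b $ a = (if b = a then vpi else 0)"
proof -
  let ?F = "\<lambda>q. coord_primitive ix (partial (ufun g ix W h K) a) q + vpi * q $ a"
  have "partial (partial (hhat g ix W h K vpi) a) b 0 = partial ?F b 0"
    by (rule partial_cong_open[OF open_\<Omega> zero_in_\<Omega>]) (rule partial_hhat_transverse[OF K a])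
  moreover have "?F (0 + t *\<^sub>R axis b 1) = t * (if b = a then vpi else 0)" for t
    using b by (simp add: coord_primitive_hyperplane axis_def)
  moreover have "((\<lambda>t. t * (if b = a then vpi else 0)) has_real_derivative (if b = a then vpi else 0))
                   (at 0)"
    by (auto intro!: derivative_eq_intros)
  ultimately show ?thesis
    unfolding hessian_def using partial_eqI[of ?F 0 b] by simp
qed

lemma pos_def_hessian_hhat:
  assumes K: "C1_on \<Omega> K"
    and ux: "partial (ufun g ix W h K) ix 0 > 0"
    and vpi: "vpi > (\<Sum>a\<in>UNIV - {ix}. (partial (ufun g ix W h K) a 0)^2) / partial (ufun g ix W h K) ix 0"
  shows "pos_def (hessian (hhat g ix W h K vpi) 0)"
  by (rule pos_def_bordered[where b = "\<lambda>i. partial (ufun g ix W h K) i 0",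
        OF hessian_hhat_col_ix[OF K] hessian_hhat_row_ix[OF K] hessian_hhat_transverse[OF K] ux vpi])

lemma not_pos_def_hessian_of_potential_eq:
  assumes ux: "partial (ufun g ix W h K) ix 0 \<le> 0" and pe: "potential_eq \<Omega> g ix W h K f"
  shows "\<not> pos_def (hessian f 0)"
proof
  assume "pos_def (hessian f 0)"
  then have "0 < axis ix 1 \<bullet> (hessian f 0 *v axis ix 1)"
    unfolding pos_def_def by (simp add: axis_eq_0_iff)
  also have "axis ix 1 \<bullet> (hessian f 0 *v axis ix 1) = partial (partial f ix) ix 0"
    by (simp add: inner_axis' matrix_vector_mult_axis_nth hessian_def)
  also have "\<dots> = partial (ufun g ix W h K) ix 0"
    by (rule partial_cong_open[OF open_\<Omega> zero_in_\<Omega>]) (use pe potential_eq_iff in blast)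
  finally show False using ux by simp
qed

end

theorem mainTheorem9:
  fixes ix :: "'n::finite" and r :: real and lo hi :: "real^'n"
    and g :: "real^'n \<Rightarrow> real^'n^'n" and W :: "real^'n \<Rightarrow> (real^'n) set"
    and h :: "real^'n \<Rightarrow> real"
  defines "\<Omega> \<equiv> box lo hi"
  assumes r: "r > 0" "lo $ ix = - r" "hi $ ix = r"
    and box0: "\<forall>k. lo $ k < 0 \<and> 0 < hi $ k"
    and g_smooth: "\<forall>i j. smooth_on \<Omega> (\<lambda>q. g q $ i $ j)"
    and g_sym: "\<forall>q\<in>\<Omega>. transpose (g q) = g q"
    and g_pos: "\<forall>q\<in>\<Omega>. pos_def (g q)"
    and W_sub: "\<forall>q\<in>\<Omega>. subspace (W q) \<and> dim (W q) = CARD('n) - 1"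
    and W_compl: "\<forall>q\<in>\<Omega>. W q \<inter> What g ix q = {0}
                      \<and> {a + b | a b. a \<in> W q \<and> b \<in> What g ix q} = UNIV"
    and W_smooth: "\<forall>q\<in>\<Omega>. \<exists>V F. open V \<and> q \<in> V \<and>
                     (\<forall>p\<in>V \<inter> \<Omega>. W p = span ((\<lambda>a. F a p) ` (UNIV - {ix}))) \<and>
                     (\<forall>a k. smooth_on V (\<lambda>p. (F a p :: real^'n) $ k))"
    and h_smooth: "smooth_on \<Omega> h"
  shows
   "(\<forall>K. smooth_on \<Omega> K \<and> (\<forall>q\<in>\<Omega>. K q > 0) \<longrightarrow>
        (kinetic_eq \<Omega> g ix W K \<longleftrightarrow>
          (\<exists>\<xi>. smooth_on \<Omega> \<xi> \<and> (\<forall>q\<in>\<Omega>. \<xi> q > 0 \<and> \<xi> q = \<xi> (upd ix q 0)) \<and>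
               (\<forall>q\<in>\<Omega>. K q = \<xi> q * exp (- oint 0 (q $ ix) (\<lambda>t. Gfun g ix W (upd ix q t)))))))
    \<and> (\<forall>K vpi. smooth_on \<Omega> K \<and> (\<forall>q\<in>\<Omega>. K q > 0) \<and> kinetic_eq \<Omega> g ix W K \<longrightarrow>
        potential_eq \<Omega> g ix W h K (hhat g ix W h K vpi))
    \<and> ((h has_derivative (\<lambda>v. 0)) (at 0) \<longrightarrow>
        (\<forall>K. smooth_on \<Omega> K \<and> (\<forall>q\<in>\<Omega>. K q > 0) \<and> kinetic_eq \<Omega> g ix W K \<longrightarrow>
          (\<forall>vpi. partial (ufun g ix W h K) ix 0 > 0 \<and>
                vpi > (\<Sum>a\<in>UNIV - {ix}. (partial (ufun g ix W h K) a 0)^2)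
                      / partial (ufun g ix W h K) ix 0 \<longrightarrow>
                (hhat g ix W h K vpi has_derivative (\<lambda>v. 0)) (at 0)
                \<and> pos_def (hessian (hhat g ix W h K vpi) 0))
          \<and> (partial (ufun g ix W h K) ix 0 \<le> 0 \<longrightarrow>
               (\<forall>f. smooth_on \<Omega> f \<and> potential_eq \<Omega> g ix W h K f \<longrightarrow>
                    \<not> pos_def (hessian f 0)))))"
proof -
  interpret codim_one_chart ix lo hi \<Omega> g W h
    by unfold_locales (use assms in \<open>simp_all add: \<Omega>_def\<close>)
  show ?thesis
    using kinetic_eq_iff_exp_formula[unfolded coord_primitive_def] potential_eq_hhat
      hhat_has_derivative_0 pos_def_hessian_hhat not_pos_def_hessian_of_potential_eq
    by (auto dest: smooth_on_imp_C1_on)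
qed

end
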